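(* Let $U,V\in\mathbb{R}_{\max}^{m\times n}$, $b,d\in\mathbb{R}_{\max}^m$, $p\in\mathbb{R}_{\max}^n$, $q\in(\mathbb{R}\cup\{+\infty\})^n$, with $A$, $B(\lambda)$, $\Phi$, strategies and the game graph as described in the context. Then $\lambda^*\in\mathbb{R}$ is optimal (i.e. $\Phi(\lambda^* )\ge 0$ and $\Phi(\lambda)<0$ for all $\lambda<\lambda^*$) if and only if $\Phi(\lambda^* )\geq 0$ and there exist a positional strategy $\tau$ of Min and a node $j$ of Min such that, in the game graph defined by $A_\tau$ and $B(\lambda^* )$, every cycle accessible from $j$ has non-positive weight, and every cycle of zero weight accessible from $j$ contains a node of Max that does not belong to the group $[m]$.
   Context: Max-plus notation: $\mathbb{R}_{\max}=\mathbb{R}\cup\{-\infty\}$, $a\oplus b=\max(a,b)$, $a\otimes b=a+b$, extended to matrices as usual ($(A\otimes B)_{ij}=\max_k(a_{ik}+b_{kj})$). $I$ is the max-plus identity (0 on the diagonal, $-\infty$ elsewhere). The conjugate $a^-$ is $-a$ for real $a$, $+\infty$ for $a=-\infty$, $-\infty$ for $a=+\infty$; $q^-=(q_i^-)$ as a row vector. These data define Problem (P): minimize $x^-\otimes p\oplus q^-\otimes x$ over $x\in\mathbb{R}^n$ subject to $U\otimes x\oplus b\le V\otimes x\oplus d$. Set $$A=\begin{pmatrix} U & b\\ -\infty & p\\ q^- & -\infty\end{pmatrix},\qquad B(\lambda)=\begin{pmatrix} V & d\\ \lambda\otimes I & -\infty\\ -\infty & \lambda\end{pmatrix}$$ ($(m+n+1)\times(n+1)$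 matrices; the middle block row of $A$ is $(-\infty_{n\times n},\,p)$, its last row is $(q^-,-\infty)$; $\lambda\otimes I$ has $\lambda$ on the diagonal and $-\infty$ elsewhere; the last row of $B(\lambda)$ is $(-\infty,\dots,-\infty,\lambda)$). Game graph defined by matrices $A'$ and $B'$ (both $(m+n+1)\times(n+1)$): nodes of Max are the rows $1,\dots,m+n+1$, and the first $m$ rows form the group $[m]$ (corresponding to the constraint $U\otimes x\oplus b\le V\otimes x\oplus d$); nodes of Min are the columns $1,\dots,n+1$. There is an arc from Max node $i$ to Min node $l$ of weight $b'_{il}$ whenever $b'_{il}\ne-\infty$, and an arc from Min node $j$ to Max node $i$ of weight $-a'_{ij}$ whenever $a'_{ij}\neq-\infty$. The weight of a cycle is the sum of its arc weights. A positional strategy of Min is a map $\tau:\{1,\dots,n+1\}\to\{1,\dots,m+n+1\}$ with $a_{\tau(j)j}\ne-\infty$; $A_\tau$ keeps the entries $a_{\tau(j)j}$ and replaces all other entries by $-\infty$. For $M\times N$ matrices $A',B'$, $A'^\sharp B'$ denotes the map $f_j(x)=\min_{k:a'_{kj}\ne-\infty}(-a'_{kj}+\max_{l:b'_{kl}\ne-\infty}(b'_{kl}+x_l))$ on $\mathbb{R}^N$, with cycle-time vector $\chi(A'^\sharp B')=\lim_k f^k(0)/k$; $\Phi(\lambda)=\min_i\chi_i(A^\sharp B(\lambda))$. (Standing assumption: every column of $A$ and every row of $B(\lambda)$ has a finite entry.) The condition $\Phi(\lambda)\ge0$ expresses that Problem (P) has a feasible $x\in\mathbb{R}^n$ with objective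 value at most $\lambda$. *)

theory Defs
  imports "HOL-Analysis.Analysis" "HOL-Library.Extended_Real"
begin

text \<open>Max-plus scalars are represented in ereal; the max-plus zero is -\<infinity>.
  Matrices are functions nat \<Rightarrow> nat \<Rightarrow> ereal, indices are 0-based.
  Rows 0..<m: constraint rows; rows m..<m+n: middle block; row m+n: last row.
  Columns 0..<n: x-columns; column n: last column.\<close>

definition Amat :: "nat \<Rightarrow> nat \<Rightarrow> (nat \<Rightarrow> nat \<Rightarrow> ereal) \<Rightarrow> (nat \<Rightarrow> ereal)
    \<Rightarrow> (nat \<Rightarrow> ereal) \<Rightarrow> (nat \<Rightarrow> ereal) \<Rightarrow> nat \<Rightarrow> nat \<Rightarrow> ereal" where
  "Amat m n U b p q i j =
     (if i < m then (if j < n then U i j else if j = n then b i else -\<infinity>)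
      else if i < m + n then (if j = n then p (i - m) else -\<infinity>)
      else if i = m + n then (if j < n then - q j else -\<infinity>)
      else -\<infinity>)"

definition Bmat :: "nat \<Rightarrow> nat \<Rightarrow> (nat \<Rightarrow> nat \<Rightarrow> ereal) \<Rightarrow> (nat \<Rightarrow> ereal)
    \<Rightarrow> real \<Rightarrow> nat \<Rightarrow> nat \<Rightarrow> ereal" where
  "Bmat m n V d lam i j =
     (if i < m then (if j < n then V i j else if j = n then d i else -\<infinity>)
      else if i < m + n then (if j = i - m then ereal lam else -\<infinity>)
      else if i = m + n then (if j = n then ereal lam else -\<infinity>)
      else -\<infinity>)"

text \<open>The map A'^# B' on R^N (M rows, N columns); vectors are nat \<Rightarrow> real,
  only coordinates < N matter.\<close>
definition sharp_map :: "nat \<Rightarrow> nat \<Rightarrow> (nat \<Rightarrow> nat \<Rightarrow> ereal) \<Rightarrow> (nat \<Rightarrow> nat \<Rightarrow> ereal)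
    \<Rightarrow> (nat \<Rightarrow> real) \<Rightarrow> (nat \<Rightarrow> real)" where
  "sharp_map M N A' B' x = (\<lambda>j. if j < N then
      Min {- real_of_ereal (A' k j)
           + Max {real_of_ereal (B' k l) + x l | l. l < N \<and> B' k l \<noteq> -\<infinity>}
          | k. k < M \<and> A' k j \<noteq> -\<infinity>}
      else 0)"

definition cycle_time :: "nat \<Rightarrow> nat \<Rightarrow> (nat \<Rightarrow> nat \<Rightarrow> ereal) \<Rightarrow> (nat \<Rightarrow> nat \<Rightarrow> ereal)
    \<Rightarrow> nat \<Rightarrow> real" where
  "cycle_time M N A' B' i = lim (\<lambda>k. ((sharp_map M N A' B' ^^ k) (\<lambda>_. 0)) i / real k)"

definition Phi :: "nat \<Rightarrow> nat \<Rightarrow> (nat \<Rightarrow> nat \<Rightarrow> ereal) \<Rightarrow> (nat \<Rightarrow> ereal)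
    \<Rightarrow> (nat \<Rightarrow> ereal) \<Rightarrow> (nat \<Rightarrow> ereal) \<Rightarrow> (nat \<Rightarrow> nat \<Rightarrow> ereal) \<Rightarrow> (nat \<Rightarrow> ereal)
    \<Rightarrow> real \<Rightarrow> real" where
  "Phi m n U b p q V d lam =
     Min {cycle_time (m + n + 1) (n + 1) (Amat m n U b p q) (Bmat m n V d lam) i | i. i < n + 1}"

definition optimal :: "(real \<Rightarrow> real) \<Rightarrow> real \<Rightarrow> bool" where
  "optimal \<Phi> lam0 \<longleftrightarrow> \<Phi> lam0 \<ge> 0 \<and> (\<forall>lam < lam0. \<Phi> lam < 0)"

definition min_strategy :: "nat \<Rightarrow> nat \<Rightarrow> (nat \<Rightarrow> nat \<Rightarrow> ereal) \<Rightarrow> (nat \<Rightarrow> nat) \<Rightarrow> bool" where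
  "min_strategy M N A' \<tau> \<longleftrightarrow> (\<forall>j < N. \<tau> j < M \<and> A' (\<tau> j) j \<noteq> -\<infinity>)"

definition restrict_strat :: "nat \<Rightarrow> (nat \<Rightarrow> nat \<Rightarrow> ereal) \<Rightarrow> (nat \<Rightarrow> nat) \<Rightarrow> nat \<Rightarrow> nat \<Rightarrow> ereal" where
  "restrict_strat N A' \<tau> i j = (if j < N \<and> i = \<tau> j then A' i j else -\<infinity>)"

text \<open>Game graph: Max nodes are rows, Min nodes are columns.\<close>
datatype gnode = MaxN nat | MinN nat

fun gg_arc :: "nat \<Rightarrow> nat \<Rightarrow> (nat \<Rightarrow> nat \<Rightarrow> ereal) \<Rightarrow> (nat \<Rightarrow> nat \<Rightarrow> ereal)
    \<Rightarrow> gnode \<Rightarrow> gnode \<Rightarrow> bool" where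
  "gg_arc M N A' B' (MaxN i) (MinN l) = (i < M \<and> l < N \<and> B' i l \<noteq> -\<infinity>)"
| "gg_arc M N A' B' (MinN j) (MaxN i) = (j < N \<and> i < M \<and> A' i j \<noteq> -\<infinity>)"
| "gg_arc M N A' B' _ _ = False"

fun gg_weight :: "(nat \<Rightarrow> nat \<Rightarrow> ereal) \<Rightarrow> (nat \<Rightarrow> nat \<Rightarrow> ereal) \<Rightarrow> gnode \<Rightarrow> gnode \<Rightarrow> real" where
  "gg_weight A' B' (MaxN i) (MinN l) = real_of_ereal (B' i l)"
| "gg_weight A' B' (MinN j) (MaxN i) = - real_of_ereal (A' i j)"
| "gg_weight A' B' _ _ = 0"

definition gg_cycle :: "nat \<Rightarrow> nat \<Rightarrow> (nat \<Rightarrow> nat \<Rightarrow> ereal) \<Rightarrow> (nat \<Rightarrow> nat \<Rightarrow> ereal)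
    \<Rightarrow> gnode list \<Rightarrow> bool" where
  "gg_cycle M N A' B' cs \<longleftrightarrow> cs \<noteq> [] \<and> distinct cs \<and>
     (\<forall>i < length cs. gg_arc M N A' B' (cs ! i) (cs ! ((i + 1) mod length cs)))"

definition cycle_weight :: "(nat \<Rightarrow> nat \<Rightarrow> ereal) \<Rightarrow> (nat \<Rightarrow> nat \<Rightarrow> ereal) \<Rightarrow> gnode list \<Rightarrow> real" where
  "cycle_weight A' B' cs = (\<Sum>i < length cs. gg_weight A' B' (cs ! i) (cs ! ((i + 1) mod length cs)))"

definition gg_reach :: "nat \<Rightarrow> nat \<Rightarrow> (nat \<Rightarrow> nat \<Rightarrow> ereal) \<Rightarrow> (nat \<Rightarrow> nat \<Rightarrow> ereal)
    \<Rightarrow> (gnode \<times> gnode) set" where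
  "gg_reach M N A' B' = {(u, v). gg_arc M N A' B' u v}\<^sup>*"

definition cycle_accessible :: "nat \<Rightarrow> nat \<Rightarrow> (nat \<Rightarrow> nat \<Rightarrow> ereal) \<Rightarrow> (nat \<Rightarrow> nat \<Rightarrow> ereal)
    \<Rightarrow> gnode \<Rightarrow> gnode list \<Rightarrow> bool" where
  "cycle_accessible M N A' B' u cs \<longleftrightarrow> (\<exists>v \<in> set cs. (u, v) \<in> gg_reach M N A' B')"

end

theory Submission
  imports Defs
begin

text \<open>
  For fixed \<open>\<lambda>\<close>, \<open>A\<^sup>\<sharp>B(\<lambda>)\<close> is the Shapley operator of a mean-payoff game. Its cycle time at a
  node \<open>j\<close> of Min is negative iff Min has a positional strategy \<open>\<tau>\<close> such that every cycle
  reachable from \<open>j\<close> in the graph of \<open>A\<^sub>\<tau>\<close> and \<open>B(\<lambda>)\<close> has negative weight. This comes from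
  positional determinacy: \<open>\<epsilon>\<close>-optimal positional strategies of the \<open>\<delta>\<close>-discounted games are
  constant along a subsequence with \<open>\<delta> \<rightarrow> 1\<close>, \<open>\<epsilon> \<rightarrow> 0\<close>, and in the limit every cycle mean
  reachable under Min's strategy is at most every cycle mean reachable under Max's; removing
  cycles from plays then bounds the iterates linearly on both sides.

  In the graph of \<open>B(\<lambda>)\<close> the weight of a cycle is affine in \<open>\<lambda>\<close>, with slope the number of its
  Max nodes outside the group \<open>[m]\<close>. Hence the pairs \<open>(\<tau>, j)\<close> winning for Min can only be lost
  as \<open>\<lambda>\<close> grows, and as there are finitely many of them, \<open>\<Phi>(\<lambda>) < 0\<close> for all \<open>\<lambda> < \<lambda>\<^sup>*\<close> iff a
  single pair wins for all \<open>\<lambda> < \<lambda>\<^sup>*\<close>, which is the stated condition on the cycles at \<open>\<lambda>\<^sup>*\<close>.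
\<close>

section \<open>Walks and cycles in weighted digraphs\<close>

abbreviation arcs :: "('a \<Rightarrow> 'a \<Rightarrow> bool) \<Rightarrow> ('a \<times> 'a) set" where
  "arcs E \<equiv> {(u, v). E u v}"

definition is_walk :: "('a \<Rightarrow> 'a \<Rightarrow> bool) \<Rightarrow> (nat \<Rightarrow> 'a) \<Rightarrow> nat \<Rightarrow> bool" where
  "is_walk E p n \<longleftrightarrow> (\<forall>t<n. E (p t) (p (Suc t)))"

definition walk_sum :: "('a \<Rightarrow> 'a \<Rightarrow> real) \<Rightarrow> (nat \<Rightarrow> 'a) \<Rightarrow> nat \<Rightarrow> real" where
  "walk_sum w p n = (\<Sum>t<n. w (p t) (p (Suc t)))"

definition cycle_path :: "'a list \<Rightarrow> nat \<Rightarrow> 'a" where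
  "cycle_path cs t = cs ! (t mod length cs)"

definition is_cycle :: "('a \<Rightarrow> 'a \<Rightarrow> bool) \<Rightarrow> 'a list \<Rightarrow> bool" where
  "is_cycle E cs \<longleftrightarrow> cs \<noteq> [] \<and> distinct cs \<and> is_walk E (cycle_path cs) (length cs)"

definition cycle_sum :: "('a \<Rightarrow> 'a \<Rightarrow> real) \<Rightarrow> 'a list \<Rightarrow> real" where
  "cycle_sum w cs = walk_sum w (cycle_path cs) (length cs)"

definition reachable_cycles :: "('a \<Rightarrow> 'a \<Rightarrow> bool) \<Rightarrow> 'a \<Rightarrow> 'a list set" where
  "reachable_cycles E v = {cs. is_cycle E cs \<and> (\<exists>x\<in>set cs. (v, x) \<in> (arcs E)\<^sup>*)}"

lemma is_walk_Suc: "is_walk E p (Suc n) \<longleftrightarrow> is_walk E p n \<and> E (p n) (p (Suc n))"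
  unfolding is_walk_def by (auto simp: less_Suc_eq)

lemma is_walk_case_nat: "is_walk E (case_nat u p) (Suc n) \<longleftrightarrow> E u (p 0) \<and> is_walk E p n"
  unfolding is_walk_def by (auto simp: less_Suc_eq_0_disj)

lemma walk_sum_case_nat: "walk_sum w (case_nat u p) (Suc n) = w u (p 0) + walk_sum w p n"
  unfolding walk_sum_def sum.lessThan_Suc_shift by simp

lemma walk_sum_diff_const: "walk_sum (\<lambda>u v. w u v - c) p n = walk_sum w p n - c * n"
  unfolding walk_sum_def by (simp add: sum_subtractf)

lemma walk_sum_uminus: "walk_sum (\<lambda>u v. - w u v) p n = - walk_sum w p n"
  unfolding walk_sum_def by (simp add: sum_negf)

lemma rtrancl_arcs_iff_walk:
  "(u, v) \<in> (arcs E)\<^sup>* \<longleftrightarrow> (\<exists>p n. p 0 = u \<and> p n = v \<and> is_walk E p n)"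
proof
  assume "(u, v) \<in> (arcs E)\<^sup>*"
  then show "\<exists>p n. p 0 = u \<and> p n = v \<and> is_walk E p n"
  proof (induction rule: converse_rtrancl_induct)
    case base
    show ?case by (rule exI[of _ "\<lambda>_. v"], rule exI[of _ 0]) (simp add: is_walk_def)
  next
    case (step u y)
    then obtain p n where "p 0 = y" "p n = v" "is_walk E p n" by blast
    with step(1) show ?case
      by (intro exI[of _ "case_nat u p"] exI[of _ "Suc n"]) (simp add: is_walk_case_nat)
  qed
next
  assume "\<exists>p n. p 0 = u \<and> p n = v \<and> is_walk E p n"
  then obtain p n where p: "p 0 = u" "p n = v" "is_walk E p n" by blast
  have "(p 0, p t) \<in> (arcs E)\<^sup>*" if "t \<le> n" for t
    using that
  proof (induction t)
    case (Suc t)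
    then show ?case using p(3) unfolding is_walk_def by (simp add: rtrancl_into_rtrancl)
  qed simp
  then show "(u, v) \<in> (arcs E)\<^sup>*" using p by blast
qed

lemma cycle_path_0: "cycle_path cs 0 = cs ! 0"
  unfolding cycle_path_def by simp

lemma cycle_path_length: "cycle_path cs (length cs) = cs ! 0"
  unfolding cycle_path_def by simp

lemma is_cycle_arc: "is_cycle E cs \<Longrightarrow> E (cycle_path cs t) (cycle_path cs (Suc t))"
  unfolding is_cycle_def is_walk_def cycle_path_def
  by (metis length_greater_0_conv mod_Suc_eq mod_less_divisor mod_mod_trivial)

lemma is_cycle_walk: "is_cycle E cs \<Longrightarrow> is_walk E (\<lambda>t. cycle_path cs (s + t)) n"
  unfolding is_walk_def by (simp add: is_cycle_arc)

lemma cycle_sum_diff_const: "cycle_sum (\<lambda>u v. w u v - c) cs = cycle_sum w cs - c * length cs"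
  unfolding cycle_sum_def by (rule walk_sum_diff_const)

lemma cycle_sum_uminus: "cycle_sum (\<lambda>u v. - w u v) cs = - cycle_sum w cs"
  unfolding cycle_sum_def by (rule walk_sum_uminus)

lemma reachable_cycle_length_pos: "cs \<in> reachable_cycles E v \<Longrightarrow> 0 < length cs"
  unfolding reachable_cycles_def is_cycle_def by simp

lemma reachable_cycle_lasso:
  assumes "cs \<in> reachable_cycles E v"
  obtains p s where "p 0 = v" "p s = cs ! 0" "is_walk E p s"
proof -
  obtain t where t: "t < length cs" "(v, cs ! t) \<in> (arcs E)\<^sup>*"
    using assms unfolding reachable_cycles_def by (auto simp: in_set_conv_nth)
  have cyc: "is_cycle E cs" using assms unfolding reachable_cycles_def by simp
  have "(cycle_path cs (t + 0), cycle_path cs (t + (length cs - t))) \<in> (arcs E)\<^sup>*"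
    unfolding rtrancl_arcs_iff_walk
    by (intro exI[of _ "\<lambda>k. cycle_path cs (t + k)"] exI[of _ "length cs - t"])
      (simp add: is_cycle_walk[OF cyc])
  then have "(cs ! t, cs ! 0) \<in> (arcs E)\<^sup>*"
    using t(1) by (simp add: cycle_path_def)
  with t(2) have "(v, cs ! 0) \<in> (arcs E)\<^sup>*" by simp
  then show thesis using that unfolding rtrancl_arcs_iff_walk by blast
qed

section \<open>Discounted potentials\<close>

definition discount_potential ::
    "('a \<Rightarrow> 'a \<Rightarrow> bool) \<Rightarrow> ('a \<Rightarrow> 'a \<Rightarrow> real) \<Rightarrow> real \<Rightarrow> ('a \<Rightarrow> real) \<Rightarrow> bool" where
  "discount_potential E w \<delta> h \<longleftrightarrow> (\<forall>u v. E u v \<longrightarrow> w u v + \<delta> * h v \<le> h u)"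

lemma discounted_walk_sum_le:
  assumes "discount_potential E w \<delta> h" "0 \<le> \<delta>" "is_walk E p n"
  shows "(\<Sum>t<n. \<delta>^t * w (p t) (p (Suc t))) + \<delta>^n * h (p n) \<le> h (p 0)"
  using assms(3)
proof (induction n)
  case (Suc n)
  have "w (p n) (p (Suc n)) + \<delta> * h (p (Suc n)) \<le> h (p n)"
    using assms(1) Suc.prems unfolding discount_potential_def is_walk_Suc by blast
  then have "\<delta>^n * (w (p n) (p (Suc n)) + \<delta> * h (p (Suc n))) \<le> \<delta>^n * h (p n)"
    using assms(2) by (simp add: mult_left_mono)
  then show ?case using Suc by (simp add: is_walk_Suc algebra_simps)
qed simp

text \<open>The normalised discounted weight \<open>(1 - \<delta>) \<Sum> \<delta>\<^sup>t w\<^sub>t\<close> of the infinite play that follows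
  \<open>p\<close> for \<open>s\<close> steps and then turns around the cycle \<open>cs\<close> forever.\<close>

definition lasso_value :: "real \<Rightarrow> ('a \<Rightarrow> 'a \<Rightarrow> real) \<Rightarrow> (nat \<Rightarrow> 'a) \<Rightarrow> nat \<Rightarrow> 'a list \<Rightarrow> real" where
  "lasso_value \<delta> w p s cs =
     (1 - \<delta>) * (\<Sum>t<s. \<delta>^t * w (p t) (p (Suc t)))
     + \<delta>^s * (\<Sum>t<length cs. \<delta>^t * w (cycle_path cs t) (cycle_path cs (Suc t)))
       / (\<Sum>t<length cs. \<delta>^t)"

lemma lasso_value_uminus: "lasso_value \<delta> (\<lambda>u v. - w u v) p s cs = - lasso_value \<delta> w p s cs"
  unfolding lasso_value_def by (simp add: sum_negf)

lemma lasso_value_le: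
  assumes h: "discount_potential E w \<delta> h" and \<delta>: "0 < \<delta>" "\<delta> < 1"
    and p: "is_walk E p s" "p s = cs ! 0" and cs: "is_cycle E cs"
  shows "lasso_value \<delta> w p s cs \<le> (1 - \<delta>) * h (p 0)"
proof -
  let ?L = "length cs"
  let ?P = "\<Sum>t<s. \<delta>^t * w (p t) (p (Suc t))"
  let ?Q = "\<Sum>t<?L. \<delta>^t * w (cycle_path cs t) (cycle_path cs (Suc t))"
  let ?D = "\<Sum>t<?L. \<delta>^t"
  have L: "0 < ?L" using cs unfolding is_cycle_def by simp
  have prefix: "?P + \<delta>^s * h (cs ! 0) \<le> h (p 0)"
    using discounted_walk_sum_le[OF h _ p(1)] \<delta> p(2) by simp
  have "?Q + \<delta>^?L * h (cs ! 0) \<le> h (cs ! 0)"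
    using discounted_walk_sum_le[OF h _ is_cycle_walk[OF cs, of 0 ?L]] \<delta>
    by (simp add: cycle_path_0 cycle_path_length)
  then have "?Q \<le> (1 - \<delta>^?L) * h (cs ! 0)" by (simp add: algebra_simps)
  also have "\<dots> = ((1 - \<delta>) * h (cs ! 0)) * ?D" by (simp add: one_diff_power_eq)
  finally have "?Q \<le> ((1 - \<delta>) * h (cs ! 0)) * ?D" .
  moreover have "0 < ?D" using L \<delta> by (intro sum_pos) auto
  ultimately have "?Q / ?D \<le> (1 - \<delta>) * h (cs ! 0)" by (simp add: pos_divide_le_eq)
  then have "\<delta>^s * (?Q / ?D) \<le> \<delta>^s * ((1 - \<delta>) * h (cs ! 0))"
    using \<delta> by (intro mult_left_mono) auto
  moreover have "(1 - \<delta>) * (?P + \<delta>^s * h (cs ! 0)) \<le> (1 - \<delta>) * h (p 0)"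
    using prefix \<delta> by (simp add: mult_left_mono)
  ultimately show ?thesis unfolding lasso_value_def by (simp add: algebra_simps)
qed

lemma lasso_value_tendsto:
  assumes "\<delta> \<longlonglongrightarrow> 1" "e \<longlonglongrightarrow> 0" "cs \<noteq> []"
  shows "(\<lambda>k. lasso_value (\<delta> k) (\<lambda>u v. w u v + e k) p s cs) \<longlonglongrightarrow> cycle_sum w cs / length cs"
proof -
  have "(\<lambda>k. lasso_value (\<delta> k) (\<lambda>u v. w u v + e k) p s cs) \<longlonglongrightarrow>
      (1 - 1) * (\<Sum>t<s. 1 ^ t * (w (p t) (p (Suc t)) + 0))
      + 1 ^ s * (\<Sum>t<length cs. 1 ^ t * (w (cycle_path cs t) (cycle_path cs (Suc t)) + 0))
        / (\<Sum>t<length cs. (1::real) ^ t)"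
    unfolding lasso_value_def using assms by (intro tendsto_intros) auto
  then show ?thesis by (simp add: cycle_sum_def walk_sum_def)
qed

section \<open>Removing cycles from walks\<close>

lemma sum_lessThan_split:
  fixes f :: "nat \<Rightarrow> 'a::comm_monoid_add"
  shows "i \<le> n \<Longrightarrow> (\<Sum>t<n. f t) = (\<Sum>t<i. f t) + (\<Sum>t\<in>{i..<n}. f t)"
  by (simp add: lessThan_atLeast0 sum.atLeastLessThan_concat)

lemma first_repeat:
  fixes p :: "nat \<Rightarrow> 'a"
  assumes "\<not> inj_on p {..n}"
  obtains i j where "i < j" "j \<le> n" "p i = p j" "inj_on p {..<j}"
proof -
  let ?R = "\<lambda>j. \<exists>i<j. p i = p j"
  obtain a b where ab: "a \<le> n" "b \<le> n" "p a = p b" "a < b \<or> b < a"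
    using assms unfolding inj_on_def by (auto simp: nat_neq_iff)
  then obtain j0 where "j0 \<le> n" "?R j0" by (metis max.absorb3 max.absorb4 max.cobounded2)
  then obtain j where j: "?R j" "\<forall>j'<j. \<not> ?R j'" using exists_least_iff[of ?R] by blast
  have "j \<le> n" using j(2) \<open>j0 \<le> n\<close> \<open>?R j0\<close> by (meson le_trans not_le)
  moreover have "inj_on p {..<j}"
  proof (rule inj_onI)
    fix x y assume "x \<in> {..<j}" "y \<in> {..<j}" "p x = p y"
    then show "x = y" using j(2) by (metis lessThan_iff nat_neq_iff)
  qed
  ultimately show thesis using that j(1) by blast
qed

lemma walk_segment_cycle:
  assumes walk: "is_walk E p n" and ij: "i < j" "j \<le> n" "p i = p j" and inj: "inj_on p {i..<j}"
  defines "cs \<equiv> map (\<lambda>t. p (i + t)) [0..<j - i]"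
  shows "is_cycle E cs" "cycle_sum w cs = (\<Sum>t\<in>{i..<j}. w (p t) (p (Suc t)))"
proof -
  have path: "cycle_path cs t = p (i + t mod (j - i))" for t
    using ij unfolding cs_def cycle_path_def by simp
  have next_eq: "cycle_path cs (Suc t) = p (Suc (i + t))" if "t < j - i" for t
  proof (cases "Suc t < j - i")
    case False
    then have "Suc t = j - i" using that by simp
    moreover from this have "Suc (i + t) = j" using ij by simp
    ultimately show ?thesis using ij by (simp add: path)
  qed (simp add: path)
  have "is_walk E (cycle_path cs) (length cs)"
    unfolding is_walk_def
  proof (intro allI impI)
    fix t assume "t < length cs"
    then have t: "t < j - i" by (simp add: cs_def)
    then have "E (p (i + t)) (p (Suc (i + t)))" using walk ij by (simp add: is_walk_def)
    then show "E (cycle_path cs t) (cycle_path cs (Suc t))"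
      using t by (subst next_eq) (simp_all add: path)
  qed
  moreover have "distinct cs"
    unfolding cs_def distinct_map
  proof
    show "inj_on (\<lambda>t. p (i + t)) (set [0..<j - i])"
    proof (rule inj_onI)
      fix x y assume "x \<in> set [0..<j - i]" "y \<in> set [0..<j - i]" "p (i + x) = p (i + y)"
      then have "i + x = i + y" by (intro inj_onD[OF inj]) auto
      then show "x = y" by simp
    qed
  qed simp
  ultimately show "is_cycle E cs" using ij unfolding is_cycle_def cs_def by simp
  have "cycle_sum w cs = (\<Sum>t<j - i. w (p (i + t)) (p (Suc (i + t))))"
    unfolding cycle_sum_def walk_sum_def
  proof (rule sum.cong)
    show "{..<length cs} = {..<j - i}" by (simp add: cs_def)
    fix t assume "t \<in> {..<j - i}"
    then show "w (cycle_path cs t) (cycle_path cs (Suc t)) = w (p (i + t)) (p (Suc (i + t)))"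
      by (subst next_eq) (simp_all add: path)
  qed
  also have "\<dots> = (\<Sum>t\<in>{i..<j}. w (p t) (p (Suc t)))"
    using ij by (simp add: sum.atLeastLessThan_shift_0[of _ i j] add.commute atLeast0LessThan)
  finally show "cycle_sum w cs = (\<Sum>t\<in>{i..<j}. w (p t) (p (Suc t)))" .
qed

lemma walk_skip_segment:
  assumes walk: "is_walk E p n" and ij: "i \<le> j" "j \<le> n" "p i = p j"
  defines "q \<equiv> \<lambda>t. if t < i then p t else p (t + (j - i))"
  shows "is_walk E q (n - (j - i))" "q 0 = p 0"
    "walk_sum w p n = walk_sum w q (n - (j - i)) + (\<Sum>t\<in>{i..<j}. w (p t) (p (Suc t)))"
proof -
  have q_Suc: "q (Suc t) = (if t < i then p (Suc t) else p (Suc t + (j - i)))" for t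
  proof (cases "Suc t = i")
    case True
    then have "q (Suc t) = p j" using ij unfolding q_def by simp
    then show ?thesis using True ij by simp
  qed (simp add: q_def)
  show "is_walk E q (n - (j - i))"
    unfolding is_walk_def
  proof (intro allI impI)
    fix t assume "t < n - (j - i)"
    then show "E (q t) (q (Suc t))"
      using walk ij unfolding q_Suc is_walk_def by (simp add: q_def)
  qed
  show "q 0 = p 0" using ij unfolding q_def by auto
  let ?f = "\<lambda>t. w (p t) (p (Suc t))"
  have "walk_sum w q (n - (j - i))
      = (\<Sum>t<i. w (q t) (q (Suc t))) + (\<Sum>t\<in>{i..<n - (j - i)}. w (q t) (q (Suc t)))"
    unfolding walk_sum_def using ij by (intro sum_lessThan_split) simp
  also have "(\<Sum>t<i. w (q t) (q (Suc t))) = (\<Sum>t<i. ?f t)"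
    by (intro sum.cong) (simp_all add: q_Suc, simp add: q_def)
  also have "(\<Sum>t\<in>{i..<n - (j - i)}. w (q t) (q (Suc t))) = (\<Sum>t\<in>{i..<n - (j - i)}. ?f (t + (j - i)))"
    by (intro sum.cong) (simp_all add: q_Suc, simp add: q_def)
  also have "\<dots> = (\<Sum>t\<in>{j..<n}. ?f t)"
    using ij sum.shift_bounds_nat_ivl[of ?f i "j - i" "n - (j - i)"] by simp
  also have "(\<Sum>t<i. ?f t) + (\<Sum>t\<in>{j..<n}. ?f t) = walk_sum w p n - (\<Sum>t\<in>{i..<j}. ?f t)"
    using ij unfolding walk_sum_def
    by (simp add: sum_lessThan_split[of i n] sum.atLeastLessThan_concat[symmetric, of i j n])
  finally show "walk_sum w p n = walk_sum w q (n - (j - i)) + (\<Sum>t\<in>{i..<j}. ?f t)"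
    by simp
qed

lemma walk_split_cycle:
  fixes p :: "nat \<Rightarrow> 'a"
  assumes walk: "is_walk E p n" and "\<not> inj_on p {..n}"
  obtains cs q where "cs \<in> reachable_cycles E (p 0)" "length cs \<le> n"
    "is_walk E q (n - length cs)" "q 0 = p 0"
    "walk_sum w p n = walk_sum w q (n - length cs) + cycle_sum w cs"
proof -
  obtain i j where ij: "i < j" "j \<le> n" "p i = p j" "inj_on p {..<j}"
    using first_repeat assms(2) by blast
  define cs where "cs = map (\<lambda>t. p (i + t)) [0..<j - i]"
  have "inj_on p {i..<j}" using ij(4) by (rule inj_on_subset) auto
  then have cyc: "is_cycle E cs" "cycle_sum w cs = (\<Sum>t\<in>{i..<j}. w (p t) (p (Suc t)))"
    using walk_segment_cycle[OF walk ij(1-3)] unfolding cs_def by blast+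
  have "is_walk E p i" using walk ij unfolding is_walk_def by simp
  then have "(p 0, cs ! 0) \<in> (arcs E)\<^sup>*"
    unfolding rtrancl_arcs_iff_walk cs_def using ij by auto
  moreover have "cs ! 0 \<in> set cs" using cyc(1) unfolding is_cycle_def by simp
  ultimately have "cs \<in> reachable_cycles E (p 0)"
    using cyc(1) unfolding reachable_cycles_def by blast
  moreover have "length cs = j - i" unfolding cs_def by simp
  ultimately show thesis
    using that walk_skip_segment[OF walk less_imp_le[OF ij(1)] ij(2,3)] cyc(2) ij by auto
qed

lemma injective_walk_length:
  assumes "is_walk E p n" "inj_on p {..n}" "finite S" "\<forall>u v. E u v \<longrightarrow> u \<in> S \<and> v \<in> S"
  shows "n \<le> card S"
proof -
  have "inj_on p {..<n}" using assms(2) by (rule inj_on_subset) auto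
  then have "n = card (p ` {..<n})" by (simp add: card_image)
  also have "\<dots> \<le> card S" using assms unfolding is_walk_def by (intro card_mono) auto
  finally show ?thesis .
qed

lemma walk_sum_bounded:
  assumes S: "finite S" "\<forall>u v. E u v \<longrightarrow> u \<in> S \<and> v \<in> S"
    and cycles: "\<forall>cs\<in>reachable_cycles E v. cycle_sum w cs \<le> 0"
  obtains K where "\<And>p n. is_walk E p n \<Longrightarrow> p 0 = v \<Longrightarrow> walk_sum w p n \<le> K"
proof -
  define W where "W = Max (insert 0 ((\<lambda>(u, v). w u v) ` (S \<times> S)))"
  have W: "0 \<le> W" "\<And>u v. E u v \<Longrightarrow> w u v \<le> W"
    unfolding W_def using S by (auto intro!: Max_ge)
  have "walk_sum w p n \<le> card S * W" if "is_walk E p n" "p 0 = v" for p n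
    using that
  proof (induction n arbitrary: p rule: less_induct)
    case (less n)
    show ?case
    proof (cases "inj_on p {..n}")
      case True
      have "w (p t) (p (Suc t)) \<le> W" if "t < n" for t
        using W(2) less.prems(1) that unfolding is_walk_def by blast
      then have "walk_sum w p n \<le> (\<Sum>t<n. W)"
        unfolding walk_sum_def by (intro sum_mono) simp
      then have "walk_sum w p n \<le> real n * W" by simp
      moreover have "real n * W \<le> card S * W"
        using injective_walk_length[OF less.prems(1) True S] W(1) by (simp add: mult_right_mono)
      ultimately show ?thesis by linarith
    next
      case False
      obtain cs q where cs: "cs \<in> reachable_cycles E (p 0)" "length cs \<le> n"
        and q: "is_walk E q (n - length cs)" "q 0 = p 0"
        and sum: "walk_sum w p n = walk_sum w q (n - length cs) + cycle_sum w cs"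
        using walk_split_cycle[OF less.prems(1) False] by blast
      have "n - length cs < n" using reachable_cycle_length_pos[OF cs(1)] cs(2) by linarith
      then have "walk_sum w q (n - length cs) \<le> card S * W"
        using less.IH q less.prems(2) by simp
      moreover have "cycle_sum w cs \<le> 0" using cycles cs(1) less.prems(2) by simp
      ultimately show ?thesis using sum by linarith
    qed
  qed
  then show thesis using that by blast
qed

lemma walk_sum_upper_bound:
  fixes c :: real
  assumes "finite S" "\<forall>u v. E u v \<longrightarrow> u \<in> S \<and> v \<in> S"
    and "\<forall>cs\<in>reachable_cycles E v. cycle_sum w cs \<le> c * length cs"
  obtains K where "\<And>p n. is_walk E p n \<Longrightarrow> p 0 = v \<Longrightarrow> walk_sum w p n \<le> c * n + K"
proof -
  have "\<forall>cs\<in>reachable_cycles E v. cycle_sum (\<lambda>u v. w u v - c) cs \<le> 0"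
    using assms(3) by (simp add: cycle_sum_diff_const)
  from walk_sum_bounded[OF assms(1,2) this] obtain K
    where K: "\<And>p n. is_walk E p n \<Longrightarrow> p 0 = v \<Longrightarrow> walk_sum (\<lambda>u v. w u v - c) p n \<le> K"
    by blast
  show thesis
  proof (rule that)
    fix p n assume "is_walk E p n" "p 0 = v"
    from K[OF this] show "walk_sum w p n \<le> c * n + K" by (simp add: walk_sum_diff_const)
  qed
qed

lemma walk_sum_lower_bound:
  fixes c :: real
  assumes "finite S" "\<forall>u v. E u v \<longrightarrow> u \<in> S \<and> v \<in> S"
    and "\<forall>cs\<in>reachable_cycles E v. c * length cs \<le> cycle_sum w cs"
  obtains K where "\<And>p n. is_walk E p n \<Longrightarrow> p 0 = v \<Longrightarrow> c * n - K \<le> walk_sum w p n"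
proof -
  have "\<forall>cs\<in>reachable_cycles E v. cycle_sum (\<lambda>u v. - w u v) cs \<le> - c * length cs"
    using assms(3) by (simp add: cycle_sum_uminus)
  from walk_sum_upper_bound[OF assms(1,2) this] obtain K
    where K: "\<And>p n. is_walk E p n \<Longrightarrow> p 0 = v \<Longrightarrow> walk_sum (\<lambda>u v. - w u v) p n \<le> - c * n + K"
    by blast
  show thesis
  proof (rule that)
    fix p n assume "is_walk E p n" "p 0 = v"
    from K[OF this] show "c * n - K \<le> walk_sum w p n" by (simp add: walk_sum_uminus)
  qed
qed

lemma finite_cycles:
  assumes "finite S" "\<forall>u v. E u v \<longrightarrow> u \<in> S \<and> v \<in> S"
  shows "finite {cs. is_cycle E cs}"
proof (rule finite_subset)
  show "{cs. is_cycle E cs} \<subseteq> {cs. set cs \<subseteq> S \<and> length cs \<le> card S}"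
  proof
    fix cs assume "cs \<in> {cs. is_cycle E cs}"
    then have cs: "is_cycle E cs" by simp
    have "set cs \<subseteq> S"
    proof
      fix x assume "x \<in> set cs"
      then obtain t where "t < length cs" "x = cycle_path cs t"
        by (auto simp: in_set_conv_nth cycle_path_def)
      then show "x \<in> S" using assms(2) is_cycle_arc[OF cs, of t] by blast
    qed
    moreover from this have "length cs \<le> card S"
      using cs assms(1) unfolding is_cycle_def by (metis card_mono distinct_card)
    ultimately show "cs \<in> {cs. set cs \<subseteq> S \<and> length cs \<le> card S}" by simp
  qed
  show "finite {cs. set cs \<subseteq> S \<and> length cs \<le> card S}"
    using assms(1) by (rule finite_lists_length_le)
qed

lemma funpow_le_funpow_mono:
  fixes f g :: "(nat \<Rightarrow> real) \<Rightarrow> nat \<Rightarrow> real"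
  assumes le: "\<And>x j. j < N \<Longrightarrow> g x j \<le> f x j"
    and mono: "\<And>x y j. \<forall>l<N. x l \<le> y l \<Longrightarrow> j < N \<Longrightarrow> f x j \<le> f y j"
  shows "j < N \<Longrightarrow> (g ^^ k) x j \<le> (f ^^ k) x j"
proof (induction k arbitrary: j)
  case (Suc k)
  have "g ((g ^^ k) x) j \<le> f ((g ^^ k) x) j" using le Suc.prems .
  also have "\<dots> \<le> f ((f ^^ k) x) j" using mono Suc by blast
  finally show ?case by simp
qed simp

lemma contraction_approx_fixpoint:
  fixes F :: "(nat \<Rightarrow> real) \<Rightarrow> nat \<Rightarrow> real"
  assumes \<delta>: "0 \<le> \<delta>" "\<delta> < 1" and \<epsilon>: "0 < \<epsilon>"
    and contr: "\<And>x y D. \<forall>l<N. \<bar>x l - y l\<bar> \<le> D \<Longrightarrow> \<forall>l<N. \<bar>F x l - F y l\<bar> \<le> \<delta> * D"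
  obtains h where "\<forall>l<N. \<bar>F h l - h l\<bar> \<le> \<epsilon>"
proof -
  define z where "z n = (F ^^ n) (\<lambda>_. 0)" for n
  define D where "D = (\<Sum>l<N. \<bar>z 1 l\<bar>)"
  have D: "0 \<le> D" unfolding D_def by (simp add: sum_nonneg)
  have step: "\<forall>l<N. \<bar>z (Suc n) l - z n l\<bar> \<le> \<delta>^n * D" for n
  proof (induction n)
    case 0
    have "\<bar>z 1 l\<bar> \<le> D" if "l < N" for l
      unfolding D_def using that by (intro member_le_sum) auto
    then show ?case by (simp add: z_def)
  next
    case (Suc n)
    then show ?case using contr[of "z (Suc n)" "z n"] by (simp add: z_def mult.assoc)
  qed
  obtain n where n: "\<delta>^n < \<epsilon> / (D + 1)" using real_arch_pow_inv \<delta> \<epsilon> D by fastforce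
  have "\<delta>^n * D \<le> \<delta>^n * (D + 1)" using \<delta> by (intro mult_left_mono) auto
  also have "\<dots> \<le> \<epsilon>" using n D by (simp add: pos_less_divide_eq less_imp_le)
  finally have "\<forall>l<N. \<bar>F (z n) l - z n l\<bar> \<le> \<epsilon>" using step[of n] by (force simp: z_def)
  then show thesis by (rule that)
qed

lemma tendsto_div_of_linear_bounds:
  fixes x :: "nat \<Rightarrow> real" and a K :: real
  assumes "\<And>k. \<bar>x k - a * k\<bar> \<le> K"
  shows "(\<lambda>k. x k / k) \<longlonglongrightarrow> a"
proof (rule tendsto_sandwich)
  have "(\<lambda>k. K / real k) \<longlonglongrightarrow> 0" by (rule lim_const_over_n)
  then show "(\<lambda>k. a - K / real k) \<longlonglongrightarrow> a" "(\<lambda>k. a + K / real k) \<longlonglongrightarrow> a"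
    using tendsto_diff[OF tendsto_const] tendsto_add[OF tendsto_const] by fastforce+
  have "a - K / k \<le> x k / k \<and> x k / k \<le> a + K / k" if "1 \<le> k" for k
  proof -
    have k: "0 < real k" using that by simp
    have "(a * k - K) / k \<le> x k / k" "x k / k \<le> (a * k + K) / k"
      using assms[of k] k by (auto intro!: divide_right_mono simp: abs_le_iff)
    moreover have "(a * k - K) / k = a - K / k" "(a * k + K) / k = a + K / k"
      using k by (simp_all add: field_simps)
    ultimately show ?thesis by simp
  qed
  then show "\<forall>\<^sub>F k in sequentially. a - K / k \<le> x k / k"
    "\<forall>\<^sub>F k in sequentially. x k / k \<le> a + K / k"
    unfolding eventually_sequentially by blast+
qed

lemma limit_div_le_of_upper_bound:
  fixes x :: "nat \<Rightarrow> real" and a K :: real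
  assumes "(\<lambda>k. x k / k) \<longlonglongrightarrow> c" "\<And>k. x k \<le> a * k + K"
  shows "c \<le> a"
proof (rule LIMSEQ_le[OF assms(1)])
  have "(\<lambda>k. K / real k) \<longlonglongrightarrow> 0" by (rule lim_const_over_n)
  then show "(\<lambda>k. a + K / real k) \<longlonglongrightarrow> a" using tendsto_add[OF tendsto_const] by fastforce
  have "x k / k \<le> a + K / k" if "1 \<le> k" for k
  proof -
    have k: "0 < real k" using that by simp
    have "x k / k \<le> (a * k + K) / k" using assms(2)[of k] k by (intro divide_right_mono) auto
    also have "\<dots> = a + K / k" using k by (simp add: field_simps)
    finally show ?thesis .
  qed
  then show "\<exists>N. \<forall>k\<ge>N. x k / k \<le> a + K / k" by blast
qed

lemma pigeonhole_subsequence: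
  assumes "finite S" "\<And>k::nat. \<exists>s\<in>S. P k s"
  obtains s and r :: "nat \<Rightarrow> nat" where "s \<in> S" "strict_mono r" "\<forall>i. P (r i) s"
proof -
  have "\<forall>k\<in>UNIV. \<exists>s\<in>S. P k s" using assms(2) by blast
  from pigeonhole_infinite_rel[OF infinite_UNIV_nat assms(1) this]
  obtain s where s: "s \<in> S" "infinite {k \<in> UNIV. P k s}" by blast
  then have "infinite {k. P k s}" by simp
  from infinite_enumerate[OF this]
  obtain r :: "nat \<Rightarrow> nat" where "strict_mono r" "\<forall>i. r i \<in> {k. P k s}"
    by blast
  then show thesis using that s(1) by simp
qed

lemma finite_cover_down_closed:
  fixes P :: "'a \<Rightarrow> real \<Rightarrow> bool"
  assumes T: "finite T" and cover: "\<And>lam. lam < lam0 \<Longrightarrow> \<exists>t\<in>T. P t lam"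
    and down: "\<And>t lam lam'. P t lam \<Longrightarrow> lam' \<le> lam \<Longrightarrow> P t lam'"
  shows "\<exists>t\<in>T. \<forall>lam<lam0. P t lam"
proof (rule ccontr)
  assume "\<not> (\<exists>t\<in>T. \<forall>lam<lam0. P t lam)"
  then obtain f where f: "\<And>t. t \<in> T \<Longrightarrow> f t < lam0 \<and> \<not> P t (f t)"
    by (metis not_le_imp_less)
  define lam where "lam = Max (insert (lam0 - 1) (f ` T))"
  have "lam < lam0" using T f unfolding lam_def by auto
  then obtain t where "t \<in> T" "P t lam" using cover by blast
  moreover have "f t \<le> lam" using T \<open>t \<in> T\<close> unfolding lam_def by auto
  ultimately show False using f down by blast
qed

lemma nonpos_if_neg_below:
  fixes W c :: real
  assumes "0 \<le> c" and neg: "\<And>\<epsilon>. 0 < \<epsilon> \<Longrightarrow> W - \<epsilon> * c < 0"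
  shows "W \<le> 0" "W = 0 \<Longrightarrow> 0 < c"
proof -
  show "W \<le> 0"
  proof (rule ccontr)
    assume "\<not> W \<le> 0"
    then have "0 < W / (c + 1)" using assms(1) by simp
    moreover have "W - W / (c + 1) * c = W / (c + 1)"
      using assms(1) by (simp add: field_simps)
    ultimately show False using neg[of "W / (c + 1)"] by linarith
  qed
  show "0 < c" if "W = 0" using neg[of 1] that by simp
qed

section \<open>The Shapley operator and its game\<close>

definition min_choices :: "nat \<Rightarrow> (nat \<Rightarrow> nat \<Rightarrow> ereal) \<Rightarrow> nat \<Rightarrow> nat set" where
  "min_choices M A j = {k. k < M \<and> A k j \<noteq> -\<infinity>}"

definition max_choices :: "nat \<Rightarrow> (nat \<Rightarrow> nat \<Rightarrow> ereal) \<Rightarrow> nat \<Rightarrow> nat set" where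
  "max_choices N B k = {l. l < N \<and> B k l \<noteq> -\<infinity>}"

definition row_max :: "nat \<Rightarrow> (nat \<Rightarrow> nat \<Rightarrow> ereal) \<Rightarrow> (nat \<Rightarrow> real) \<Rightarrow> nat \<Rightarrow> real" where
  "row_max N B x k = Max ((\<lambda>l. real_of_ereal (B k l) + x l) ` max_choices N B k)"

text \<open>The Shapley operator of the game in which every move is discounted by \<open>\<delta>\<close>.\<close>

definition discounted_map :: "nat \<Rightarrow> nat \<Rightarrow> (nat \<Rightarrow> nat \<Rightarrow> ereal) \<Rightarrow> (nat \<Rightarrow> nat \<Rightarrow> ereal)
    \<Rightarrow> real \<Rightarrow> (nat \<Rightarrow> real) \<Rightarrow> nat \<Rightarrow> real" where
  "discounted_map M N A B \<delta> x j = (if j < N then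
     Min ((\<lambda>k. - real_of_ereal (A k j) + \<delta> * row_max N B (\<lambda>l. \<delta> * x l) k) ` min_choices M A j)
     else 0)"

lemma sharp_map_eq_discounted_map: "sharp_map M N A B = discounted_map M N A B 1"
  unfolding sharp_map_def discounted_map_def row_max_def min_choices_def max_choices_def
  by (intro ext) (simp add: setcompr_eq_image)

lemma row_max_ge: "l \<in> max_choices N B k \<Longrightarrow> real_of_ereal (B k l) + x l \<le> row_max N B x k"
  unfolding row_max_def max_choices_def by (intro Max_ge) auto

lemma discounted_map_le:
  "j < N \<Longrightarrow> k \<in> min_choices M A j \<Longrightarrow>
    discounted_map M N A B \<delta> x j \<le> - real_of_ereal (A k j) + \<delta> * row_max N B (\<lambda>l. \<delta> * x l) k"
  unfolding discounted_map_def min_choices_def by simp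

definition max_strategy :: "nat \<Rightarrow> nat \<Rightarrow> (nat \<Rightarrow> nat \<Rightarrow> ereal) \<Rightarrow> (nat \<Rightarrow> nat) \<Rightarrow> bool" where
  "max_strategy M N B \<sigma> \<longleftrightarrow> (\<forall>k<M. \<sigma> k < N \<and> B k (\<sigma> k) \<noteq> -\<infinity>)"

definition restrict_max_strat :: "(nat \<Rightarrow> nat) \<Rightarrow> (nat \<Rightarrow> nat \<Rightarrow> ereal) \<Rightarrow> nat \<Rightarrow> nat \<Rightarrow> ereal" where
  "restrict_max_strat \<sigma> B k l = (if l = \<sigma> k then B k l else -\<infinity>)"

definition game_nodes :: "nat \<Rightarrow> nat \<Rightarrow> gnode set" where
  "game_nodes M N = MinN ` {..<N} \<union> MaxN ` {..<M}"

lemma finite_game_nodes: "finite (game_nodes M N)"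
  unfolding game_nodes_def by simp

lemma gg_arc_game_nodes: "\<forall>u v. gg_arc M N A B u v \<longrightarrow> u \<in> game_nodes M N \<and> v \<in> game_nodes M N"
proof (intro allI impI)
  fix u v assume "gg_arc M N A B u v"
  then show "u \<in> game_nodes M N \<and> v \<in> game_nodes M N"
    by (cases u; cases v) (auto simp: game_nodes_def)
qed

locale game =
  fixes M N :: nat and A B :: "nat \<Rightarrow> nat \<Rightarrow> ereal"
  assumes col_finite: "\<forall>j<N. \<exists>k<M. A k j \<noteq> -\<infinity>"
    and row_finite: "\<forall>k<M. \<exists>l<N. B k l \<noteq> -\<infinity>"
begin

abbreviation "arc_tau \<tau> \<equiv> gg_arc M N (restrict_strat N A \<tau>) B"

abbreviation "weight_tau \<tau> \<equiv> gg_weight (restrict_strat N A \<tau>) B"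

abbreviation "arc_sigma \<sigma> \<equiv> gg_arc M N A (restrict_max_strat \<sigma> B)"

abbreviation "weight_sigma \<sigma> \<equiv> gg_weight A (restrict_max_strat \<sigma> B)"

lemma row_max_attained:
  assumes "k < M"
  obtains l where "l \<in> max_choices N B k" "row_max N B x k = real_of_ereal (B k l) + x l"
proof -
  have "max_choices N B k \<noteq> {}" using row_finite assms unfolding max_choices_def by auto
  then have "row_max N B x k \<in> (\<lambda>l. real_of_ereal (B k l) + x l) ` max_choices N B k"
    unfolding row_max_def max_choices_def by (intro Max_in) auto
  then show thesis using that by blast
qed

lemma discounted_map_attained:
  assumes "j < N"
  obtains k where "k \<in> min_choices M A j"
    "discounted_map M N A B \<delta> x j = - real_of_ereal (A k j) + \<delta> * row_max N B (\<lambda>l. \<delta> * x l) k"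
proof -
  have "min_choices M A j \<noteq> {}" using col_finite assms unfolding min_choices_def by auto
  then have "discounted_map M N A B \<delta> x j
      \<in> (\<lambda>k. - real_of_ereal (A k j) + \<delta> * row_max N B (\<lambda>l. \<delta> * x l) k) ` min_choices M A j"
    unfolding discounted_map_def min_choices_def using assms by simp
  then show thesis using that by blast
qed

lemma row_max_shift:
  assumes "k < M" "\<forall>l<N. x l \<le> y l + D"
  shows "row_max N B x k \<le> row_max N B y k + D"
proof -
  obtain l where l: "l \<in> max_choices N B k" "row_max N B x k = real_of_ereal (B k l) + x l"
    using row_max_attained[OF assms(1)] .
  then have "row_max N B x k \<le> real_of_ereal (B k l) + y l + D"
    using assms(2) unfolding max_choices_def by force
  also have "\<dots> \<le> row_max N B y k + D" using row_max_ge[OF l(1)] by simp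
  finally show ?thesis .
qed

lemma discounted_map_shift:
  assumes "0 \<le> \<delta>" "\<forall>l<N. x l \<le> y l + D" "j < N"
  shows "discounted_map M N A B \<delta> x j \<le> discounted_map M N A B \<delta> y j + \<delta> * (\<delta> * D)"
proof -
  obtain k where k: "k \<in> min_choices M A j"
    "discounted_map M N A B \<delta> y j = - real_of_ereal (A k j) + \<delta> * row_max N B (\<lambda>l. \<delta> * y l) k"
    using discounted_map_attained[OF assms(3)] .
  have "\<forall>l<N. \<delta> * x l \<le> \<delta> * y l + \<delta> * D"
    using assms(1,2) by (simp add: mult_left_mono flip: distrib_left)
  then have "row_max N B (\<lambda>l. \<delta> * x l) k \<le> row_max N B (\<lambda>l. \<delta> * y l) k + \<delta> * D"
    using k(1) unfolding min_choices_def by (intro row_max_shift) auto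
  then have "\<delta> * row_max N B (\<lambda>l. \<delta> * x l) k \<le> \<delta> * row_max N B (\<lambda>l. \<delta> * y l) k + \<delta> * (\<delta> * D)"
    using assms(1) by (simp add: mult_left_mono flip: distrib_left)
  then show ?thesis using discounted_map_le[OF assms(3) k(1), of B \<delta> x] k(2) by linarith
qed

lemma discounted_map_contraction:
  assumes "0 \<le> \<delta>" "\<delta> \<le> 1" "\<forall>l<N. \<bar>x l - y l\<bar> \<le> D" "j < N"
  shows "\<bar>discounted_map M N A B \<delta> x j - discounted_map M N A B \<delta> y j\<bar> \<le> \<delta> * D"
proof -
  have "0 \<le> D" using assms(3,4) by force
  then have "\<delta> * (\<delta> * D) \<le> \<delta> * D" using assms(1,2) by (simp add: mult_left_le_one_le)
  moreover have "\<forall>l<N. x l \<le> y l + D" "\<forall>l<N. y l \<le> x l + D" using assms(3) by force+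
  then have "discounted_map M N A B \<delta> x j \<le> discounted_map M N A B \<delta> y j + \<delta> * (\<delta> * D)"
    "discounted_map M N A B \<delta> y j \<le> discounted_map M N A B \<delta> x j + \<delta> * (\<delta> * D)"
    using discounted_map_shift[OF assms(1) _ assms(4)] by blast+
  ultimately show ?thesis unfolding abs_le_iff by linarith
qed

lemma sharp_map_mono:
  "\<forall>l<N. x l \<le> y l \<Longrightarrow> j < N \<Longrightarrow> sharp_map M N A B x j \<le> sharp_map M N A B y j"
  using discounted_map_shift[of 1 x y 0 j] unfolding sharp_map_eq_discounted_map by simp

lemma sharp_map_le:
  "j < N \<Longrightarrow> k \<in> min_choices M A j \<Longrightarrow>
    sharp_map M N A B x j \<le> - real_of_ereal (A k j) + row_max N B x k"
  using discounted_map_le[of j N k M A B 1 x] by (simp add: sharp_map_eq_discounted_map)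

lemma sharp_map_attained:
  assumes "j < N"
  obtains k where "k \<in> min_choices M A j"
    "sharp_map M N A B x j = - real_of_ereal (A k j) + row_max N B x k"
proof -
  obtain k where "k \<in> min_choices M A j"
    "discounted_map M N A B 1 x j = - real_of_ereal (A k j) + 1 * row_max N B (\<lambda>l. 1 * x l) k"
    using discounted_map_attained[OF assms] by blast
  then show thesis using that by (simp add: sharp_map_eq_discounted_map)
qed

lemma sharp_iterate_walk:
  assumes "j < N"
  obtains p where "p 0 = MinN j" "is_walk (gg_arc M N A B) p (2 * k)"
    "(sharp_map M N A B ^^ k) (\<lambda>_. 0) j = walk_sum (gg_weight A B) p (2 * k)"
  using assms
proof (induction k arbitrary: j thesis)
  case 0
  then show ?case by (simp add: is_walk_def walk_sum_def)
next
  case (Suc k)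
  let ?x = "(sharp_map M N A B ^^ k) (\<lambda>_. 0)"
  obtain i where i: "i \<in> min_choices M A j"
    "sharp_map M N A B ?x j = - real_of_ereal (A i j) + row_max N B ?x i"
    using sharp_map_attained[OF Suc.prems(2)] by blast
  then obtain l where l: "l \<in> max_choices N B i" "row_max N B ?x i = real_of_ereal (B i l) + ?x l"
    using row_max_attained unfolding min_choices_def by blast
  obtain p where p: "p 0 = MinN l" "is_walk (gg_arc M N A B) p (2 * k)"
    "?x l = walk_sum (gg_weight A B) p (2 * k)"
    using Suc.IH l(1) unfolding max_choices_def by blast
  let ?p = "case_nat (MinN j) (case_nat (MaxN i) p)"
  have "is_walk (gg_arc M N A B) ?p (2 * Suc k)"
    using p i(1) l(1) Suc.prems(2) by (simp add: is_walk_case_nat min_choices_def max_choices_def)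
  moreover have "(sharp_map M N A B ^^ Suc k) (\<lambda>_. 0) j = walk_sum (gg_weight A B) ?p (2 * Suc k)"
    using i(2) l(2) p by (simp add: walk_sum_case_nat)
  ultimately show ?case using Suc.prems(1)[of ?p] by simp
qed

lemma game_restrict_strat: "min_strategy M N A \<tau> \<Longrightarrow> game M N (restrict_strat N A \<tau>) B"
  unfolding game_def min_strategy_def restrict_strat_def using row_finite by auto

lemma game_restrict_max_strat: "max_strategy M N B \<sigma> \<Longrightarrow> game M N A (restrict_max_strat \<sigma> B)"
  unfolding game_def max_strategy_def restrict_max_strat_def using col_finite by auto

lemma sharp_map_le_restrict_strat:
  assumes "min_strategy M N A \<tau>" "j < N"
  shows "sharp_map M N A B x j \<le> sharp_map M N (restrict_strat N A \<tau>) B x j"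
proof -
  have "min_choices M (restrict_strat N A \<tau>) j = {\<tau> j}"
    using assms unfolding min_choices_def min_strategy_def restrict_strat_def by auto
  then have "sharp_map M N (restrict_strat N A \<tau>) B x j
      = - real_of_ereal (A (\<tau> j) j) + row_max N B x (\<tau> j)"
    unfolding sharp_map_eq_discounted_map discounted_map_def using assms(2)
    by (simp add: restrict_strat_def)
  moreover have "\<tau> j \<in> min_choices M A j"
    using assms unfolding min_strategy_def min_choices_def by auto
  ultimately show ?thesis using sharp_map_le[OF assms(2)] by simp
qed

lemma sharp_map_restrict_max_strat_le:
  assumes "max_strategy M N B \<sigma>" "j < N"
  shows "sharp_map M N A (restrict_max_strat \<sigma> B) x j \<le> sharp_map M N A B x j"
proof -
  obtain k where k: "k \<in> min_choices M A j"
    "sharp_map M N A B x j = - real_of_ereal (A k j) + row_max N B x k"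
    using sharp_map_attained[OF assms(2)] by blast
  have kM: "k < M" using k(1) unfolding min_choices_def by simp
  have "max_choices N (restrict_max_strat \<sigma> B) k = {\<sigma> k}"
    using assms kM unfolding max_choices_def max_strategy_def restrict_max_strat_def by auto
  then have "row_max N (restrict_max_strat \<sigma> B) x k = real_of_ereal (B k (\<sigma> k)) + x (\<sigma> k)"
    unfolding row_max_def by (simp add: restrict_max_strat_def)
  also have "\<dots> \<le> row_max N B x k"
    using assms kM unfolding max_strategy_def by (intro row_max_ge) (simp add: max_choices_def)
  finally have "row_max N (restrict_max_strat \<sigma> B) x k \<le> row_max N B x k" .
  moreover have "sharp_map M N A (restrict_max_strat \<sigma> B) x j
      \<le> - real_of_ereal (A k j) + row_max N (restrict_max_strat \<sigma> B) x k"
    using discounted_map_le[OF assms(2) k(1), of "restrict_max_strat \<sigma> B" 1 x]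
    by (simp add: sharp_map_eq_discounted_map)
  ultimately show ?thesis using k(2) by simp
qed

lemma sharp_iterate_le_restrict_strat:
  assumes "min_strategy M N A \<tau>" "j < N"
  shows "(sharp_map M N A B ^^ k) x j \<le> (sharp_map M N (restrict_strat N A \<tau>) B ^^ k) x j"
proof -
  interpret restricted: game M N "restrict_strat N A \<tau>" B using game_restrict_strat[OF assms(1)] .
  show ?thesis
    by (rule funpow_le_funpow_mono[OF _ _ assms(2)])
      (use sharp_map_le_restrict_strat[OF assms(1)] restricted.sharp_map_mono in blast)+
qed

lemma sharp_iterate_restrict_max_strat_le:
  assumes "max_strategy M N B \<sigma>" "j < N"
  shows "(sharp_map M N A (restrict_max_strat \<sigma> B) ^^ k) x j \<le> (sharp_map M N A B ^^ k) x j"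
  by (rule funpow_le_funpow_mono[OF _ _ assms(2)])
    (use sharp_map_restrict_max_strat_le[OF assms(1)] sharp_map_mono in blast)+

text \<open>The potential \<open>H\<close> is an \<open>\<epsilon>\<close>-approximate value of the \<open>\<delta>\<close>-discounted game: with the
  strategy \<open>\<tau>\<close> Min pays at most \<open>H\<close>, with the strategy \<open>\<sigma>\<close> Max receives at least \<open>H\<close>, up to
  \<open>\<epsilon>\<close> per move.\<close>

definition eps_optimal :: "real \<Rightarrow> real \<Rightarrow> (nat \<Rightarrow> nat) \<Rightarrow> (nat \<Rightarrow> nat) \<Rightarrow> (gnode \<Rightarrow> real) \<Rightarrow> bool" where
  "eps_optimal \<delta> \<epsilon> \<sigma> \<tau> H \<longleftrightarrow>
     \<sigma> \<in> {..<M} \<rightarrow>\<^sub>E {..<N} \<and> max_strategy M N B \<sigma> \<and>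
     \<tau> \<in> {..<N} \<rightarrow>\<^sub>E {..<M} \<and> min_strategy M N A \<tau> \<and>
     discount_potential (arc_tau \<tau>) (\<lambda>u v. weight_tau \<tau> u v - \<epsilon>) \<delta> H \<and>
     discount_potential (arc_sigma \<sigma>) (\<lambda>u v. - (weight_sigma \<sigma> u v + \<epsilon>)) \<delta> (\<lambda>u. - H u)"

definition fixpoint_potential :: "real \<Rightarrow> (nat \<Rightarrow> real) \<Rightarrow> gnode \<Rightarrow> real" where
  "fixpoint_potential \<delta> h u = (case u of MinN j \<Rightarrow> h j | MaxN k \<Rightarrow> row_max N B (\<lambda>l. \<delta> * h l) k)"

lemma fixpoint_potential_restrict_strat:
  assumes h: "\<forall>l<N. \<bar>discounted_map M N A B \<delta> h l - h l\<bar> \<le> \<epsilon>" and "0 \<le> \<epsilon>"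
    and \<tau>: "\<And>j. j < N \<Longrightarrow> discounted_map M N A B \<delta> h j
      = - real_of_ereal (A (\<tau> j) j) + \<delta> * row_max N B (\<lambda>l. \<delta> * h l) (\<tau> j)"
  shows "discount_potential (arc_tau \<tau>) (\<lambda>u v. weight_tau \<tau> u v - \<epsilon>) \<delta> (fixpoint_potential \<delta> h)"
  unfolding discount_potential_def
proof (intro allI impI)
  fix u v assume arc: "arc_tau \<tau> u v"
  show "weight_tau \<tau> u v - \<epsilon> + \<delta> * fixpoint_potential \<delta> h v \<le> fixpoint_potential \<delta> h u"
  proof (cases u)
    case (MaxN k)
    then obtain l where "v = MinN l" "l \<in> max_choices N B k"
      using arc by (cases v) (auto simp: max_choices_def)
    then show ?thesis
      using row_max_ge[of l N B k "\<lambda>l. \<delta> * h l"] MaxN \<open>0 \<le> \<epsilon>\<close> by (simp add: fixpoint_potential_def)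
  next
    case (MinN j)
    then obtain i where "v = MaxN i" "j < N" "i = \<tau> j"
      using arc by (cases v) (auto simp: restrict_strat_def split: if_splits)
    then show ?thesis
      using h \<tau> MinN by (force simp: fixpoint_potential_def restrict_strat_def)
  qed
qed

lemma fixpoint_potential_restrict_max_strat:
  assumes h: "\<forall>l<N. \<bar>discounted_map M N A B \<delta> h l - h l\<bar> \<le> \<epsilon>" and "0 \<le> \<epsilon>"
    and \<sigma>: "\<And>k. k < M \<Longrightarrow> row_max N B (\<lambda>l. \<delta> * h l) k = real_of_ereal (B k (\<sigma> k)) + \<delta> * h (\<sigma> k)"
  shows "discount_potential (arc_sigma \<sigma>) (\<lambda>u v. - (weight_sigma \<sigma> u v + \<epsilon>)) \<delta>
    (\<lambda>u. - fixpoint_potential \<delta> h u)"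
  unfolding discount_potential_def
proof (intro allI impI)
  fix u v assume arc: "arc_sigma \<sigma> u v"
  show "- (weight_sigma \<sigma> u v + \<epsilon>) + \<delta> * - fixpoint_potential \<delta> h v \<le> - fixpoint_potential \<delta> h u"
  proof (cases u)
    case (MaxN k)
    then obtain l where "v = MinN l" "k < M" "l = \<sigma> k"
      using arc by (cases v) (auto simp: restrict_max_strat_def split: if_splits)
    then show ?thesis
      using \<sigma> MaxN \<open>0 \<le> \<epsilon>\<close> by (simp add: fixpoint_potential_def restrict_max_strat_def)
  next
    case (MinN j)
    then obtain i where i: "v = MaxN i" "j < N" "i \<in> min_choices M A j"
      using arc by (cases v) (auto simp: min_choices_def)
    then show ?thesis
      using h discounted_map_le[OF i(2,3), of B \<delta> h] MinN by (force simp: fixpoint_potential_def)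
  qed
qed

lemma exists_eps_optimal:
  assumes \<delta>: "0 < \<delta>" "\<delta> < 1" and \<epsilon>: "0 < \<epsilon>"
  obtains \<sigma> \<tau> H where "eps_optimal \<delta> \<epsilon> \<sigma> \<tau> H"
proof -
  let ?F = "discounted_map M N A B \<delta>"
  obtain h where h: "\<forall>l<N. \<bar>?F h l - h l\<bar> \<le> \<epsilon>"
    using contraction_approx_fixpoint[OF _ \<delta>(2) \<epsilon>, of N ?F] discounted_map_contraction \<delta> by force
  let ?y = "\<lambda>l. \<delta> * h l"
  define \<tau> where "\<tau> = (\<lambda>j\<in>{..<N}. SOME k. k \<in> min_choices M A j \<and>
      ?F h j = - real_of_ereal (A k j) + \<delta> * row_max N B ?y k)"
  define \<sigma> where "\<sigma> = (\<lambda>k\<in>{..<M}. SOME l. l \<in> max_choices N B k \<and>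
      row_max N B ?y k = real_of_ereal (B k l) + ?y l)"
  have \<tau>: "\<tau> j \<in> min_choices M A j"
    "?F h j = - real_of_ereal (A (\<tau> j) j) + \<delta> * row_max N B ?y (\<tau> j)"
    if j: "j < N" for j
  proof -
    obtain k where "k \<in> min_choices M A j" "?F h j = - real_of_ereal (A k j) + \<delta> * row_max N B ?y k"
      using discounted_map_attained[OF j] .
    then show "\<tau> j \<in> min_choices M A j"
      "?F h j = - real_of_ereal (A (\<tau> j) j) + \<delta> * row_max N B ?y (\<tau> j)"
      unfolding \<tau>_def using j someI[where P = "\<lambda>k. k \<in> min_choices M A j \<and>
        ?F h j = - real_of_ereal (A k j) + \<delta> * row_max N B ?y k"] by auto
  qed
  have \<sigma>: "\<sigma> k \<in> max_choices N B k"
    "row_max N B ?y k = real_of_ereal (B k (\<sigma> k)) + ?y (\<sigma> k)"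
    if k: "k < M" for k
  proof -
    obtain l where "l \<in> max_choices N B k" "row_max N B ?y k = real_of_ereal (B k l) + ?y l"
      using row_max_attained[OF k] .
    then show "\<sigma> k \<in> max_choices N B k"
      "row_max N B ?y k = real_of_ereal (B k (\<sigma> k)) + ?y (\<sigma> k)"
      unfolding \<sigma>_def using k someI[where P = "\<lambda>l. l \<in> max_choices N B k \<and>
        row_max N B ?y k = real_of_ereal (B k l) + ?y l"] by auto
  qed
  have "\<tau> \<in> {..<N} \<rightarrow>\<^sub>E {..<M}" "min_strategy M N A \<tau>"
    using \<tau>(1) unfolding \<tau>_def min_strategy_def min_choices_def by auto
  moreover have "\<sigma> \<in> {..<M} \<rightarrow>\<^sub>E {..<N}" "max_strategy M N B \<sigma>"
    using \<sigma>(1) unfolding \<sigma>_def max_strategy_def max_choices_def by auto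
  moreover have
    "discount_potential (arc_tau \<tau>) (\<lambda>u v. weight_tau \<tau> u v - \<epsilon>) \<delta> (fixpoint_potential \<delta> h)"
    using fixpoint_potential_restrict_strat[OF h _ \<tau>(2)] \<epsilon> by simp
  moreover have "discount_potential (arc_sigma \<sigma>) (\<lambda>u v. - (weight_sigma \<sigma> u v + \<epsilon>)) \<delta>
      (\<lambda>u. - fixpoint_potential \<delta> h u)"
    using fixpoint_potential_restrict_max_strat[OF h _ \<sigma>(2)] \<epsilon> by simp
  ultimately show thesis using that unfolding eps_optimal_def by blast
qed

lemma eps_optimal_lasso_le:
  assumes opt: "eps_optimal \<delta> \<epsilon> \<sigma> \<tau> H" and \<delta>: "0 < \<delta>" "\<delta> < 1"
    and p1: "is_walk (arc_tau \<tau>) p1 s1" "p1 0 = MinN j" "p1 s1 = C1 ! 0"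
      "is_cycle (arc_tau \<tau>) C1"
    and p2: "is_walk (arc_sigma \<sigma>) p2 s2" "p2 0 = MinN j" "p2 s2 = C2 ! 0"
      "is_cycle (arc_sigma \<sigma>) C2"
  shows "lasso_value \<delta> (\<lambda>u v. weight_tau \<tau> u v - \<epsilon>) p1 s1 C1
    \<le> lasso_value \<delta> (\<lambda>u v. weight_sigma \<sigma> u v + \<epsilon>) p2 s2 C2"
proof -
  have "lasso_value \<delta> (\<lambda>u v. weight_tau \<tau> u v - \<epsilon>) p1 s1 C1 \<le> (1 - \<delta>) * H (MinN j)"
    using lasso_value_le[OF _ \<delta> p1(1,3,4)] opt p1(2) unfolding eps_optimal_def by auto
  moreover have "discount_potential (arc_sigma \<sigma>) (\<lambda>u v. - (weight_sigma \<sigma> u v + \<epsilon>)) \<delta> (\<lambda>u. - H u)"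
    using opt unfolding eps_optimal_def by blast
  from lasso_value_le[OF this \<delta> p2(1,3,4)]
  have "lasso_value \<delta> (\<lambda>u v. - (weight_sigma \<sigma> u v + \<epsilon>)) p2 s2 C2 \<le> (1 - \<delta>) * - H (MinN j)"
    using p2(2) by simp
  ultimately show ?thesis
    using lasso_value_uminus[of \<delta> "\<lambda>u v. weight_sigma \<sigma> u v + \<epsilon>" p2 s2 C2] by linarith
qed

lemma eps_optimal_cycle_mean_le:
  assumes \<delta>: "\<delta> \<longlonglongrightarrow> 1" "\<And>k. 0 < \<delta> k" "\<And>k. \<delta> k < 1" and \<epsilon>: "\<epsilon> \<longlonglongrightarrow> 0"
    and opt: "\<And>k. eps_optimal (\<delta> k) (\<epsilon> k) \<sigma> \<tau> (H k)"
    and C1: "C1 \<in> reachable_cycles (arc_tau \<tau>) (MinN j)"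
    and C2: "C2 \<in> reachable_cycles (arc_sigma \<sigma>) (MinN j)"
  shows "cycle_sum (weight_tau \<tau>) C1 / length C1 \<le> cycle_sum (weight_sigma \<sigma>) C2 / length C2"
proof -
  obtain p1 s1 where p1: "p1 0 = MinN j" "p1 s1 = C1 ! 0" "is_walk (arc_tau \<tau>) p1 s1"
    using reachable_cycle_lasso[OF C1] .
  obtain p2 s2 where p2: "p2 0 = MinN j" "p2 s2 = C2 ! 0" "is_walk (arc_sigma \<sigma>) p2 s2"
    using reachable_cycle_lasso[OF C2] .
  have cyc: "is_cycle (arc_tau \<tau>) C1" "is_cycle (arc_sigma \<sigma>) C2"
    using C1 C2 unfolding reachable_cycles_def by auto
  then have "C1 \<noteq> []" "C2 \<noteq> []" unfolding is_cycle_def by auto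
  have "(\<lambda>k. - \<epsilon> k) \<longlonglongrightarrow> 0" using tendsto_minus[OF \<epsilon>] by simp
  from lasso_value_tendsto[OF \<delta>(1) this \<open>C1 \<noteq> []\<close>]
  have lim1: "(\<lambda>k. lasso_value (\<delta> k) (\<lambda>u v. weight_tau \<tau> u v - \<epsilon> k) p1 s1 C1)
      \<longlonglongrightarrow> cycle_sum (weight_tau \<tau>) C1 / length C1"
    by simp
  have lim2: "(\<lambda>k. lasso_value (\<delta> k) (\<lambda>u v. weight_sigma \<sigma> u v + \<epsilon> k) p2 s2 C2)
      \<longlonglongrightarrow> cycle_sum (weight_sigma \<sigma>) C2 / length C2"
    using lasso_value_tendsto[OF \<delta>(1) \<epsilon> \<open>C2 \<noteq> []\<close>] .
  have "\<forall>k. lasso_value (\<delta> k) (\<lambda>u v. weight_tau \<tau> u v - \<epsilon> k) p1 s1 C1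
      \<le> lasso_value (\<delta> k) (\<lambda>u v. weight_sigma \<sigma> u v + \<epsilon> k) p2 s2 C2"
    using eps_optimal_lasso_le[OF opt \<delta>(2,3) p1(3,1,2) cyc(1) p2(3,1,2) cyc(2)] by blast
  then show ?thesis using LIMSEQ_le[OF lim1 lim2] by blast
qed

theorem exists_optimal_strategies:
  obtains \<sigma> \<tau> where "max_strategy M N B \<sigma>" "\<tau> \<in> {..<N} \<rightarrow>\<^sub>E {..<M}" "min_strategy M N A \<tau>"
    "\<And>j C1 C2. C1 \<in> reachable_cycles (arc_tau \<tau>) (MinN j) \<Longrightarrow>
      C2 \<in> reachable_cycles (arc_sigma \<sigma>) (MinN j) \<Longrightarrow>
      cycle_sum (weight_tau \<tau>) C1 / length C1 \<le> cycle_sum (weight_sigma \<sigma>) C2 / length C2"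
proof -
  define \<epsilon> :: "nat \<Rightarrow> real" where "\<epsilon> k = 1 / (k + 2)" for k
  define \<delta> where "\<delta> k = 1 - \<epsilon> k" for k
  have \<epsilon>: "0 < \<epsilon> k" for k unfolding \<epsilon>_def by simp
  have \<delta>: "0 < \<delta> k" "\<delta> k < 1" for k unfolding \<delta>_def \<epsilon>_def by (simp_all add: field_simps)
  \<comment> \<open>Extensional strategies are finitely many, so one pair \<open>(\<sigma>, \<tau>)\<close> of \<open>\<epsilon>\<close>-optimal
    strategies serves for a whole subsequence of discounts tending to \<open>1\<close>.\<close>
  let ?S = "({..<M} \<rightarrow>\<^sub>E {..<N}) \<times> ({..<N} \<rightarrow>\<^sub>E {..<M})"
  let ?R = "\<lambda>k st. \<exists>H. eps_optimal (\<delta> k) (\<epsilon> k) (fst st) (snd st) H"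
  have fin: "finite ?S" by (intro finite_cartesian_product finite_PiE) auto
  have choices: "\<exists>st\<in>?S. ?R k st" for k
  proof -
    obtain \<sigma> \<tau> H where "eps_optimal (\<delta> k) (\<epsilon> k) \<sigma> \<tau> H"
      using exists_eps_optimal[OF \<delta>(1,2) \<epsilon>] .
    moreover from this have "\<sigma> \<in> {..<M} \<rightarrow>\<^sub>E {..<N}" "\<tau> \<in> {..<N} \<rightarrow>\<^sub>E {..<M}"
      unfolding eps_optimal_def by blast+
    ultimately show ?thesis by (intro bexI[of _ "(\<sigma>, \<tau>)"]) auto
  qed
  obtain st and r :: "nat \<Rightarrow> nat" where "st \<in> ?S" and r: "strict_mono r" "\<forall>i. ?R (r i) st"
    by (rule pigeonhole_subsequence[OF fin choices])
  obtain \<sigma> \<tau> where "st = (\<sigma>, \<tau>)" by (cases st)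
  with r(2) have "\<forall>i. \<exists>H. eps_optimal (\<delta> (r i)) (\<epsilon> (r i)) \<sigma> \<tau> H" by simp
  from choice[OF this] obtain H where opt: "\<And>i. eps_optimal (\<delta> (r i)) (\<epsilon> (r i)) \<sigma> \<tau> (H i)"
    by blast
  have "\<epsilon> \<longlonglongrightarrow> 0"
    unfolding \<epsilon>_def using LIMSEQ_ignore_initial_segment[OF lim_1_over_n[where 'a=real], of 2]
    by (simp add: add.commute)
  then have "\<delta> \<longlonglongrightarrow> 1" "\<epsilon> \<longlonglongrightarrow> 0"
    unfolding \<delta>_def using tendsto_diff[OF tendsto_const, of \<epsilon> 0 sequentially 1] by simp_all
  then have lim: "(\<lambda>i. \<delta> (r i)) \<longlonglongrightarrow> 1" "(\<lambda>i. \<epsilon> (r i)) \<longlonglongrightarrow> 0"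
    using LIMSEQ_subseq_LIMSEQ[OF _ r(1)] by (simp_all add: comp_def)
  show thesis
  proof (rule that)
    show "max_strategy M N B \<sigma>" "\<tau> \<in> {..<N} \<rightarrow>\<^sub>E {..<M}" "min_strategy M N A \<tau>"
      using opt[of 0] unfolding eps_optimal_def by simp_all
    fix j C1 C2
    assume "C1 \<in> reachable_cycles (arc_tau \<tau>) (MinN j)"
      and "C2 \<in> reachable_cycles (arc_sigma \<sigma>) (MinN j)"
    then show "cycle_sum (weight_tau \<tau>) C1 / length C1 \<le> cycle_sum (weight_sigma \<sigma>) C2 / length C2"
      using eps_optimal_cycle_mean_le[OF lim(1) \<delta>(1,2) lim(2) opt] by blast
  qed
qed

lemma reachable_cycles_nonempty:
  assumes "j < N"
  shows "reachable_cycles (gg_arc M N A B) (MinN j) \<noteq> {}"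
proof -
  let ?n = "card (game_nodes M N)"
  obtain p where p: "p 0 = MinN j" "is_walk (gg_arc M N A B) p (2 * Suc ?n)"
    using sharp_iterate_walk[OF assms, where k = "Suc ?n"] by blast
  have "\<not> inj_on p {..2 * Suc ?n}"
  proof
    assume "inj_on p {..2 * Suc ?n}"
    from injective_walk_length[OF p(2) this finite_game_nodes gg_arc_game_nodes] show False by simp
  qed
  then obtain cs where "cs \<in> reachable_cycles (gg_arc M N A B) (p 0)"
    using walk_split_cycle[OF p(2), where w = "gg_weight A B"] by blast
  then show ?thesis using p(1) by auto
qed

lemma sharp_iterate_upper_bound:
  fixes c :: real
  assumes "j < N"
    and "\<forall>C\<in>reachable_cycles (gg_arc M N A B) (MinN j). cycle_sum (gg_weight A B) C \<le> c * length C"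
  obtains K where "\<And>k. (sharp_map M N A B ^^ k) (\<lambda>_. 0) j \<le> 2 * c * k + K"
proof -
  obtain K where K: "\<And>p n. is_walk (gg_arc M N A B) p n \<Longrightarrow> p 0 = MinN j \<Longrightarrow>
      walk_sum (gg_weight A B) p n \<le> c * n + K"
    using walk_sum_upper_bound[OF finite_game_nodes gg_arc_game_nodes assms(2)] by blast
  show thesis
  proof (rule that)
    fix k
    obtain p where "p 0 = MinN j" "is_walk (gg_arc M N A B) p (2 * k)"
      "(sharp_map M N A B ^^ k) (\<lambda>_. 0) j = walk_sum (gg_weight A B) p (2 * k)"
      using sharp_iterate_walk[OF assms(1)] by blast
    then show "(sharp_map M N A B ^^ k) (\<lambda>_. 0) j \<le> 2 * c * k + K" using K[of p "2 * k"] by simp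
  qed
qed

lemma sharp_iterate_lower_bound:
  fixes c :: real
  assumes "j < N"
    and "\<forall>C\<in>reachable_cycles (gg_arc M N A B) (MinN j). c * length C \<le> cycle_sum (gg_weight A B) C"
  obtains K where "\<And>k. 2 * c * k - K \<le> (sharp_map M N A B ^^ k) (\<lambda>_. 0) j"
proof -
  obtain K where K: "\<And>p n. is_walk (gg_arc M N A B) p n \<Longrightarrow> p 0 = MinN j \<Longrightarrow>
      c * n - K \<le> walk_sum (gg_weight A B) p n"
    using walk_sum_lower_bound[OF finite_game_nodes gg_arc_game_nodes assms(2)] by blast
  show thesis
  proof (rule that)
    fix k
    obtain p where "p 0 = MinN j" "is_walk (gg_arc M N A B) p (2 * k)"
      "(sharp_map M N A B ^^ k) (\<lambda>_. 0) j = walk_sum (gg_weight A B) p (2 * k)"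
      using sharp_iterate_walk[OF assms(1)] by blast
    then show "2 * c * k - K \<le> (sharp_map M N A B ^^ k) (\<lambda>_. 0) j" using K[of p "2 * k"] by simp
  qed
qed

lemma max_mean_cycle:
  assumes "j < N"
  obtains C0 where "C0 \<in> reachable_cycles (gg_arc M N A B) (MinN j)"
    "\<And>C. C \<in> reachable_cycles (gg_arc M N A B) (MinN j) \<Longrightarrow>
      cycle_sum (gg_weight A B) C \<le> cycle_sum (gg_weight A B) C0 / length C0 * length C"
proof -
  let ?mean = "\<lambda>C. cycle_sum (gg_weight A B) C / length C"
  let ?R = "reachable_cycles (gg_arc M N A B) (MinN j)"
  have "finite ?R"
    using finite_cycles[OF finite_game_nodes gg_arc_game_nodes]
    by (rule finite_subset[rotated]) (auto simp: reachable_cycles_def)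
  moreover have "?R \<noteq> {}" using reachable_cycles_nonempty[OF assms] .
  ultimately have "Max (?mean ` ?R) \<in> ?mean ` ?R" "\<And>C. C \<in> ?R \<Longrightarrow> ?mean C \<le> Max (?mean ` ?R)"
    by auto
  moreover from this(1) obtain C0 where "C0 \<in> ?R" "Max (?mean ` ?R) = ?mean C0" by blast
  ultimately have C0: "C0 \<in> ?R" "\<And>C. C \<in> ?R \<Longrightarrow> ?mean C \<le> ?mean C0" by auto
  show thesis
  proof (rule that[OF C0(1)])
    fix C assume C: "C \<in> ?R"
    have "0 < real (length C)" using reachable_cycle_length_pos[OF C] by simp
    then show "cycle_sum (gg_weight A B) C \<le> ?mean C0 * length C"
      using C0(2)[OF C] by (simp only: pos_divide_le_eq)
  qed
qed

lemma sharp_iterate_growth: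
  assumes \<sigma>: "max_strategy M N B \<sigma>" and \<tau>: "min_strategy M N A \<tau>" and j: "j < N"
    and sandwich: "\<And>C1 C2. C1 \<in> reachable_cycles (arc_tau \<tau>) (MinN j) \<Longrightarrow>
      C2 \<in> reachable_cycles (arc_sigma \<sigma>) (MinN j) \<Longrightarrow>
      cycle_sum (weight_tau \<tau>) C1 / length C1 \<le> cycle_sum (weight_sigma \<sigma>) C2 / length C2"
  shows "\<exists>c. (\<lambda>k. (sharp_map M N A B ^^ k) (\<lambda>_. 0) j / k) \<longlonglongrightarrow> 2 * c \<and>
    (\<forall>C\<in>reachable_cycles (arc_tau \<tau>) (MinN j). cycle_sum (weight_tau \<tau>) C \<le> c * length C)"
proof -
  interpret tau: game M N "restrict_strat N A \<tau>" B using game_restrict_strat[OF \<tau>] .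
  interpret sigma: game M N A "restrict_max_strat \<sigma> B" using game_restrict_max_strat[OF \<sigma>] .
  obtain C0 where C0: "C0 \<in> reachable_cycles (arc_tau \<tau>) (MinN j)"
    and upper: "\<And>C. C \<in> reachable_cycles (arc_tau \<tau>) (MinN j) \<Longrightarrow>
      cycle_sum (weight_tau \<tau>) C \<le> cycle_sum (weight_tau \<tau>) C0 / length C0 * length C"
    using tau.max_mean_cycle[OF j] by blast
  define c where "c = cycle_sum (weight_tau \<tau>) C0 / length C0"
  have lower:
    "\<forall>C\<in>reachable_cycles (arc_sigma \<sigma>) (MinN j). c * length C \<le> cycle_sum (weight_sigma \<sigma>) C"
  proof
    fix C assume C: "C \<in> reachable_cycles (arc_sigma \<sigma>) (MinN j)"
    have "0 < real (length C)" using reachable_cycle_length_pos[OF C] by simp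
    then show "c * length C \<le> cycle_sum (weight_sigma \<sigma>) C"
      using sandwich[OF C0 C] unfolding c_def by (simp only: pos_le_divide_eq)
  qed
  obtain K2
    where K2: "\<And>k. 2 * c * k - K2 \<le> (sharp_map M N A (restrict_max_strat \<sigma> B) ^^ k) (\<lambda>_. 0) j"
    using sigma.sharp_iterate_lower_bound[OF j lower] by blast
  have upper': "\<forall>C\<in>reachable_cycles (arc_tau \<tau>) (MinN j). cycle_sum (weight_tau \<tau>) C \<le> c * length C"
    using upper unfolding c_def by blast
  then obtain K1
    where K1: "\<And>k. (sharp_map M N (restrict_strat N A \<tau>) B ^^ k) (\<lambda>_. 0) j \<le> 2 * c * k + K1"
    using tau.sharp_iterate_upper_bound[OF j] by blast
  have "\<bar>(sharp_map M N A B ^^ k) (\<lambda>_. 0) j - 2 * c * k\<bar> \<le> max K1 K2" for k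
    using K1[of k] K2[of k] max.cobounded1[of K1 K2] max.cobounded2[of K2 K1]
      sharp_iterate_le_restrict_strat[OF \<tau> j, where k = k and x = "\<lambda>_. 0"]
      sharp_iterate_restrict_max_strat_le[OF \<sigma> j, where k = k and x = "\<lambda>_. 0"]
    unfolding abs_le_iff by linarith
  then have "(\<lambda>k. (sharp_map M N A B ^^ k) (\<lambda>_. 0) j / k) \<longlonglongrightarrow> 2 * c"
    by (rule tendsto_div_of_linear_bounds)
  with upper' show ?thesis by blast
qed

text \<open>An application of \<open>sharp_map\<close> is a round of two moves, hence the factor \<open>2\<close>.\<close>

theorem cycle_time_strategy:
  obtains \<tau> where "\<tau> \<in> {..<N} \<rightarrow>\<^sub>E {..<M}" "min_strategy M N A \<tau>"
    "\<And>j. j < N \<Longrightarrow> (\<lambda>k. (sharp_map M N A B ^^ k) (\<lambda>_. 0) j / k) \<longlonglongrightarrow> cycle_time M N A B j"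
    "\<And>j C. j < N \<Longrightarrow> C \<in> reachable_cycles (arc_tau \<tau>) (MinN j) \<Longrightarrow>
      cycle_sum (weight_tau \<tau>) C \<le> cycle_time M N A B j / 2 * length C"
proof -
  obtain \<sigma> \<tau> where \<sigma>: "max_strategy M N B \<sigma>" and \<tau>: "\<tau> \<in> {..<N} \<rightarrow>\<^sub>E {..<M}" "min_strategy M N A \<tau>"
    and sandwich: "\<And>j C1 C2. C1 \<in> reachable_cycles (arc_tau \<tau>) (MinN j) \<Longrightarrow>
      C2 \<in> reachable_cycles (arc_sigma \<sigma>) (MinN j) \<Longrightarrow>
      cycle_sum (weight_tau \<tau>) C1 / length C1 \<le> cycle_sum (weight_sigma \<sigma>) C2 / length C2"
    using exists_optimal_strategies by blast
  have "\<exists>c. (\<lambda>k. (sharp_map M N A B ^^ k) (\<lambda>_. 0) j / k) \<longlonglongrightarrow> 2 * c \<and>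
      (\<forall>C\<in>reachable_cycles (arc_tau \<tau>) (MinN j). cycle_sum (weight_tau \<tau>) C \<le> c * length C)"
    if "j < N" for j
    using sharp_iterate_growth[OF \<sigma> \<tau>(2) that sandwich] .
  then have "\<forall>j. \<exists>c. j < N \<longrightarrow> (\<lambda>k. (sharp_map M N A B ^^ k) (\<lambda>_. 0) j / k) \<longlonglongrightarrow> 2 * c \<and>
      (\<forall>C\<in>reachable_cycles (arc_tau \<tau>) (MinN j). cycle_sum (weight_tau \<tau>) C \<le> c * length C)"
    by blast
  from choice[OF this] obtain c where c:
    "\<And>j. j < N \<Longrightarrow> (\<lambda>k. (sharp_map M N A B ^^ k) (\<lambda>_. 0) j / k) \<longlonglongrightarrow> 2 * c j"
    "\<And>j. j < N \<Longrightarrow>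
      \<forall>C\<in>reachable_cycles (arc_tau \<tau>) (MinN j). cycle_sum (weight_tau \<tau>) C \<le> c j * length C"
    by blast
  have "cycle_time M N A B j = 2 * c j" if "j < N" for j
    using c(1)[OF that] unfolding cycle_time_def by (rule limI)
  then show thesis using that \<tau> c by simp
qed

lemma cycle_time_tendsto:
  assumes "j < N"
  shows "(\<lambda>k. (sharp_map M N A B ^^ k) (\<lambda>_. 0) j / k) \<longlonglongrightarrow> cycle_time M N A B j"
proof (rule cycle_time_strategy)
  fix \<tau>
  assume "\<And>j. j < N \<Longrightarrow> (\<lambda>k. (sharp_map M N A B ^^ k) (\<lambda>_. 0) j / k) \<longlonglongrightarrow> cycle_time M N A B j"
  then show ?thesis using assms .
qed

lemma cycle_time_neg_imp_strategy:
  assumes j: "j < N" and neg: "cycle_time M N A B j < 0"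
  shows "\<exists>\<tau>\<in>{..<N} \<rightarrow>\<^sub>E {..<M}. min_strategy M N A \<tau> \<and>
    (\<forall>C\<in>reachable_cycles (arc_tau \<tau>) (MinN j). cycle_sum (weight_tau \<tau>) C < 0)"
proof (rule cycle_time_strategy)
  fix \<tau> assume \<tau>: "\<tau> \<in> {..<N} \<rightarrow>\<^sub>E {..<M}" "min_strategy M N A \<tau>"
    and cycles: "\<And>j C. j < N \<Longrightarrow> C \<in> reachable_cycles (arc_tau \<tau>) (MinN j) \<Longrightarrow>
      cycle_sum (weight_tau \<tau>) C \<le> cycle_time M N A B j / 2 * length C"
  have "cycle_sum (weight_tau \<tau>) C < 0" if C: "C \<in> reachable_cycles (arc_tau \<tau>) (MinN j)" for C
  proof -
    have "cycle_time M N A B j / 2 * length C < 0"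
      using neg reachable_cycle_length_pos[OF C] by (simp add: mult_neg_pos)
    then show ?thesis using cycles[OF j C] by linarith
  qed
  then show ?thesis using \<tau> by blast
qed

lemma cycle_time_neg_of_strategy:
  assumes j: "j < N" and \<tau>: "min_strategy M N A \<tau>"
    and neg: "\<forall>C\<in>reachable_cycles (arc_tau \<tau>) (MinN j). cycle_sum (weight_tau \<tau>) C < 0"
  shows "cycle_time M N A B j < 0"
proof -
  interpret tau: game M N "restrict_strat N A \<tau>" B using game_restrict_strat[OF \<tau>] .
  obtain C0 where C0: "C0 \<in> reachable_cycles (arc_tau \<tau>) (MinN j)"
    and upper: "\<And>C. C \<in> reachable_cycles (arc_tau \<tau>) (MinN j) \<Longrightarrow>
      cycle_sum (weight_tau \<tau>) C \<le> cycle_sum (weight_tau \<tau>) C0 / length C0 * length C"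
    using tau.max_mean_cycle[OF j] by blast
  define c where "c = cycle_sum (weight_tau \<tau>) C0 / length C0"
  have "c < 0"
    unfolding c_def using neg C0 reachable_cycle_length_pos[OF C0] by (simp add: divide_neg_pos)
  have "\<forall>C\<in>reachable_cycles (arc_tau \<tau>) (MinN j). cycle_sum (weight_tau \<tau>) C \<le> c * length C"
    using upper unfolding c_def by blast
  then obtain K where "\<And>k. (sharp_map M N (restrict_strat N A \<tau>) B ^^ k) (\<lambda>_. 0) j \<le> 2 * c * k + K"
    using tau.sharp_iterate_upper_bound[OF j] by blast
  then have "cycle_time M N A B j \<le> 2 * c"
    using sharp_iterate_le_restrict_strat[OF \<tau> j] order_trans
    by (intro limit_div_le_of_upper_bound[OF cycle_time_tendsto[OF j]]) blast
  then show ?thesis using \<open>c < 0\<close> by simp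
qed

end

section \<open>Dependence on the parameter\<close>

text \<open>The Max nodes outside the group \<open>[m]\<close>: every finite entry of their row of \<open>B(\<lambda>)\<close>
  equals \<open>\<lambda>\<close>.\<close>

definition lambda_node :: "nat \<Rightarrow> gnode \<Rightarrow> bool" where
  "lambda_node m u \<longleftrightarrow> (\<exists>i. u = MaxN i \<and> m \<le> i)"

lemma gg_arc_Bmat: "gg_arc M N A (Bmat m n V d lam) = gg_arc M N A (Bmat m n V d lam')"
proof (intro ext)
  fix u v
  show "gg_arc M N A (Bmat m n V d lam) u v = gg_arc M N A (Bmat m n V d lam') u v"
    by (cases u; cases v) (simp_all add: Bmat_def)
qed

lemma gg_weight_Bmat:
  assumes "gg_arc M N A (Bmat m n V d lam0) u v"
  shows "gg_weight A (Bmat m n V d lam) u v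
    = gg_weight A (Bmat m n V d lam0) u v + (if lambda_node m u then lam - lam0 else 0)"
proof (cases u)
  case (MaxN i)
  with assms obtain l where "v = MinN l" "Bmat m n V d lam0 i l \<noteq> -\<infinity>" by (cases v) auto
  then show ?thesis using MaxN by (auto simp: Bmat_def lambda_node_def split: if_splits)
next
  case (MinN j)
  with assms obtain i where "v = MaxN i" by (cases v) auto
  then show ?thesis using MinN by (simp add: lambda_node_def)
qed

lemma cycle_sum_Bmat:
  assumes "is_cycle (gg_arc M N A (Bmat m n V d lam0)) C"
  shows "cycle_sum (gg_weight A (Bmat m n V d lam)) C
    = cycle_sum (gg_weight A (Bmat m n V d lam0)) C
      + (lam - lam0) * length (filter (lambda_node m) C)"
proof -
  have "cycle_sum (gg_weight A (Bmat m n V d lam)) C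
      = (\<Sum>t<length C. gg_weight A (Bmat m n V d lam0) (cycle_path C t) (cycle_path C (Suc t))
          + (if lambda_node m (C ! t) then lam - lam0 else 0))"
    unfolding cycle_sum_def walk_sum_def
  proof (rule sum.cong)
    fix t assume "t \<in> {..<length C}"
    then have "cycle_path C t = C ! t" by (simp add: cycle_path_def)
    with gg_weight_Bmat[OF is_cycle_arc[OF assms, of t], of lam]
    show "gg_weight A (Bmat m n V d lam) (cycle_path C t) (cycle_path C (Suc t))
      = gg_weight A (Bmat m n V d lam0) (cycle_path C t) (cycle_path C (Suc t))
        + (if lambda_node m (C ! t) then lam - lam0 else 0)" by simp
  qed simp
  also have "\<dots> = cycle_sum (gg_weight A (Bmat m n V d lam0)) C
      + (lam - lam0) * card {t. t < length C \<and> lambda_node m (C ! t)}"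
    by (simp add: sum.distrib cycle_sum_def walk_sum_def sum.If_cases Int_def)
  finally show ?thesis by (simp add: length_filter_conv_card)
qed

lemma length_filter_lambda_node_pos:
  "0 < length (filter (lambda_node m) C) \<longleftrightarrow> (\<exists>i. MaxN i \<in> set C \<and> m \<le> i)"
  by (auto simp: length_greater_0_conv filter_empty_conv lambda_node_def)

lemma Phi_neg_iff:
  "Phi m n U b p q V d lam < 0 \<longleftrightarrow>
    (\<exists>j<n + 1. cycle_time (m + n + 1) (n + 1) (Amat m n U b p q) (Bmat m n V d lam) j < 0)"
  unfolding Phi_def by (subst Min_less_iff) auto

lemma gg_cycle_conditions_iff:
  "(\<forall>cs. gg_cycle M N A B cs \<and> cycle_accessible M N A B u cs \<longrightarrow> P (cycle_weight A B cs) cs) \<longleftrightarrow>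
    (\<forall>cs\<in>reachable_cycles (gg_arc M N A B) u. P (cycle_sum (gg_weight A B) cs) cs)"
proof -
  have "gg_cycle M N A B cs \<and> cycle_accessible M N A B u cs
      \<longleftrightarrow> cs \<in> reachable_cycles (gg_arc M N A B) u" for cs
    unfolding gg_cycle_def cycle_accessible_def gg_reach_def reachable_cycles_def is_cycle_def
      is_walk_def cycle_path_def
    by (auto simp: mod_Suc_eq)
  moreover have "cycle_weight A B cs = cycle_sum (gg_weight A B) cs" for cs
    unfolding cycle_weight_def cycle_sum_def walk_sum_def cycle_path_def
    by (intro sum.cong) (simp_all add: mod_Suc_eq)
  ultimately show ?thesis by auto
qed

locale parametric_game =
  fixes m n :: nat and A V :: "nat \<Rightarrow> nat \<Rightarrow> ereal" and d :: "nat \<Rightarrow> ereal"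
  assumes game: "\<And>lam. game (m + n + 1) (n + 1) A (Bmat m n V d lam)"
begin

abbreviation "strat_arc lam \<tau> \<equiv>
  gg_arc (m + n + 1) (n + 1) (restrict_strat (n + 1) A \<tau>) (Bmat m n V d lam)"

abbreviation "strat_weight lam \<tau> \<equiv> gg_weight (restrict_strat (n + 1) A \<tau>) (Bmat m n V d lam)"

definition min_wins :: "real \<Rightarrow> (nat \<Rightarrow> nat) \<Rightarrow> nat \<Rightarrow> bool" where
  "min_wins lam \<tau> j \<longleftrightarrow>
     (\<forall>C\<in>reachable_cycles (strat_arc lam \<tau>) (MinN j). cycle_sum (strat_weight lam \<tau>) C < 0)"

definition optimality_certificate :: "real \<Rightarrow> (nat \<Rightarrow> nat) \<Rightarrow> nat \<Rightarrow> bool" where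
  "optimality_certificate lam0 \<tau> j \<longleftrightarrow> (\<forall>C\<in>reachable_cycles (strat_arc lam0 \<tau>) (MinN j).
     cycle_sum (strat_weight lam0 \<tau>) C \<le> 0 \<and>
     (cycle_sum (strat_weight lam0 \<tau>) C = 0 \<longrightarrow> (\<exists>i. MaxN i \<in> set C \<and> m \<le> i)))"

lemma cycle_sum_shift:
  assumes "C \<in> reachable_cycles (strat_arc lam0 \<tau>) (MinN j)"
  shows "C \<in> reachable_cycles (strat_arc lam \<tau>) (MinN j)"
    "cycle_sum (strat_weight lam \<tau>) C
      = cycle_sum (strat_weight lam0 \<tau>) C + (lam - lam0) * length (filter (lambda_node m) C)"
proof -
  have "strat_arc lam \<tau> = strat_arc lam0 \<tau>" by (rule gg_arc_Bmat)
  then show "C \<in> reachable_cycles (strat_arc lam \<tau>) (MinN j)" using assms by simp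
  show "cycle_sum (strat_weight lam \<tau>) C
      = cycle_sum (strat_weight lam0 \<tau>) C + (lam - lam0) * length (filter (lambda_node m) C)"
    using assms cycle_sum_Bmat unfolding reachable_cycles_def by blast
qed

lemma min_wins_mono:
  assumes "lam' \<le> lam" "min_wins lam \<tau> j"
  shows "min_wins lam' \<tau> j"
  unfolding min_wins_def
proof
  fix C assume "C \<in> reachable_cycles (strat_arc lam' \<tau>) (MinN j)"
  then have C: "C \<in> reachable_cycles (strat_arc lam \<tau>) (MinN j)" by (rule cycle_sum_shift(1))
  have "(lam' - lam) * length (filter (lambda_node m) C) \<le> 0"
    using assms(1) by (simp add: mult_nonpos_nonneg)
  moreover have "cycle_sum (strat_weight lam \<tau>) C < 0"
    using assms(2) C unfolding min_wins_def by blast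
  ultimately show "cycle_sum (strat_weight lam' \<tau>) C < 0"
    using cycle_sum_shift(2)[OF C, of lam'] by linarith
qed

lemma optimality_certificate_iff_min_wins_below:
  "optimality_certificate lam0 \<tau> j \<longleftrightarrow> (\<forall>lam<lam0. min_wins lam \<tau> j)"
proof
  assume cert: "optimality_certificate lam0 \<tau> j"
  show "\<forall>lam<lam0. min_wins lam \<tau> j"
    unfolding min_wins_def
  proof (intro allI impI ballI)
    fix lam C assume lam: "lam < lam0" and "C \<in> reachable_cycles (strat_arc lam \<tau>) (MinN j)"
    from this(2) have C: "C \<in> reachable_cycles (strat_arc lam0 \<tau>) (MinN j)"
      by (rule cycle_sum_shift(1))
    let ?W = "cycle_sum (strat_weight lam0 \<tau>) C" and ?c = "real (length (filter (lambda_node m) C))"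
    have "?W < 0 \<or> ?W = 0 \<and> 0 < ?c"
      using cert C length_filter_lambda_node_pos unfolding optimality_certificate_def by fastforce
    then have "?W + (lam - lam0) * ?c < 0"
      using lam by (auto simp: mult_nonpos_nonneg mult_neg_pos add_neg_nonpos)
    then show "cycle_sum (strat_weight lam \<tau>) C < 0" using cycle_sum_shift(2)[OF C, of lam] by simp
  qed
next
  assume wins: "\<forall>lam<lam0. min_wins lam \<tau> j"
  show "optimality_certificate lam0 \<tau> j"
    unfolding optimality_certificate_def
  proof (intro ballI conjI impI)
    fix C assume C: "C \<in> reachable_cycles (strat_arc lam0 \<tau>) (MinN j)"
    let ?W = "cycle_sum (strat_weight lam0 \<tau>) C" and ?c = "real (length (filter (lambda_node m) C))"
    have neg: "?W - \<epsilon> * ?c < 0" if "0 < \<epsilon>" for \<epsilon>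
    proof -
      have "min_wins (lam0 - \<epsilon>) \<tau> j" using wins that by simp
      then have "cycle_sum (strat_weight (lam0 - \<epsilon>) \<tau>) C < 0"
        using cycle_sum_shift(1)[OF C] unfolding min_wins_def by blast
      then show ?thesis using cycle_sum_shift(2)[OF C, of "lam0 - \<epsilon>"] by simp
    qed
    show "?W \<le> 0" using nonpos_if_neg_below[OF _ neg] by simp
    show "\<exists>i. MaxN i \<in> set C \<and> m \<le> i" if "?W = 0"
      using nonpos_if_neg_below(2)[OF _ neg that] length_filter_lambda_node_pos by simp
  qed
qed

lemma optimality_certificate_iff_gg_cycles:
  "(let Atau = restrict_strat (n + 1) A \<tau>; Blam = Bmat m n V d lam0
    in (\<forall>cs. gg_cycle (m + n + 1) (n + 1) Atau Blam cs
                \<and> cycle_accessible (m + n + 1) (n + 1) Atau Blam (MinN j) cs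
                \<longrightarrow> cycle_weight Atau Blam cs \<le> 0
                    \<and> (cycle_weight Atau Blam cs = 0 \<longrightarrow> (\<exists>i. MaxN i \<in> set cs \<and> m \<le> i))))
   \<longleftrightarrow> optimality_certificate lam0 \<tau> j"
  unfolding Let_def optimality_certificate_def by (rule gg_cycle_conditions_iff)

theorem cycle_time_neg_below_iff:
  "(\<forall>lam<lam0. \<exists>j<n + 1. cycle_time (m + n + 1) (n + 1) A (Bmat m n V d lam) j < 0) \<longleftrightarrow>
    (\<exists>\<tau> j. min_strategy (m + n + 1) (n + 1) A \<tau> \<and> j < n + 1 \<and> optimality_certificate lam0 \<tau> j)"
proof
  let ?T = "{..<n + 1} \<times> {\<tau> \<in> {..<n + 1} \<rightarrow>\<^sub>E {..<m + n + 1}. min_strategy (m + n + 1) (n + 1) A \<tau>}"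
  assume neg: "\<forall>lam<lam0. \<exists>j<n + 1. cycle_time (m + n + 1) (n + 1) A (Bmat m n V d lam) j < 0"
  have "\<exists>t\<in>?T. min_wins lam (snd t) (fst t)" if lam: "lam < lam0" for lam
  proof -
    obtain j where j: "j < n + 1" "cycle_time (m + n + 1) (n + 1) A (Bmat m n V d lam) j < 0"
      using neg lam by blast
    from game.cycle_time_neg_imp_strategy[OF game j] obtain \<tau>
      where "\<tau> \<in> {..<n + 1} \<rightarrow>\<^sub>E {..<m + n + 1}" "min_strategy (m + n + 1) (n + 1) A \<tau>"
        "min_wins lam \<tau> j"
      unfolding min_wins_def by blast
    then show ?thesis using j(1) by (intro bexI[of _ "(j, \<tau>)"]) auto
  qed
  moreover have "finite ?T"
  proof (rule finite_subset)
    show "?T \<subseteq> {..<n + 1} \<times> ({..<n + 1} \<rightarrow>\<^sub>E {..<m + n + 1})" by auto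
    show "finite ({..<n + 1} \<times> ({..<n + 1} \<rightarrow>\<^sub>E {..<m + n + 1}))"
      by (intro finite_cartesian_product finite_PiE) auto
  qed
  ultimately obtain t where "t \<in> ?T" "\<forall>lam<lam0. min_wins lam (snd t) (fst t)"
    using finite_cover_down_closed[of ?T lam0 "\<lambda>t lam. min_wins lam (snd t) (fst t)"] min_wins_mono
    by blast
  then obtain j \<tau> where "j < n + 1" "min_strategy (m + n + 1) (n + 1) A \<tau>"
    "\<forall>lam<lam0. min_wins lam \<tau> j"
    by auto
  then show
    "\<exists>\<tau> j. min_strategy (m + n + 1) (n + 1) A \<tau> \<and> j < n + 1 \<and> optimality_certificate lam0 \<tau> j"
    using optimality_certificate_iff_min_wins_below by blast
next
  assume "\<exists>\<tau> j. min_strategy (m + n + 1) (n + 1) A \<tau> \<and> j < n + 1 \<and> optimality_certificate lam0 \<tau> j"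
  then obtain \<tau> j where \<tau>: "min_strategy (m + n + 1) (n + 1) A \<tau>" and j: "j < n + 1"
    and "\<forall>lam<lam0. min_wins lam \<tau> j"
    using optimality_certificate_iff_min_wins_below by blast
  then show "\<forall>lam<lam0. \<exists>j<n + 1. cycle_time (m + n + 1) (n + 1) A (Bmat m n V d lam) j < 0"
    using game.cycle_time_neg_of_strategy[OF game j \<tau>] unfolding min_wins_def by blast
qed

end

theorem proposition7:
  fixes m n :: nat
    and U V :: "nat \<Rightarrow> nat \<Rightarrow> ereal"
    and b d p q :: "nat \<Rightarrow> ereal"
    and lam0 :: real
  assumes U_fin: "\<forall>i < m. \<forall>j < n. U i j \<noteq> \<infinity>"
    and V_fin: "\<forall>i < m. \<forall>j < n. V i j \<noteq> \<infinity>"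
    and b_fin: "\<forall>i < m. b i \<noteq> \<infinity>"
    and d_fin: "\<forall>i < m. d i \<noteq> \<infinity>"
    and p_fin: "\<forall>j < n. p j \<noteq> \<infinity>"
    and q_fin: "\<forall>j < n. q j \<noteq> -\<infinity>"
    and A_cols: "\<forall>j < n + 1. \<exists>i < m + n + 1. Amat m n U b p q i j \<noteq> -\<infinity>"
    and B_rows: "\<forall>lam. \<forall>i < m + n + 1. \<exists>l < n + 1. Bmat m n V d lam i l \<noteq> -\<infinity>"
  shows "optimal (Phi m n U b p q V d) lam0 \<longleftrightarrow>
    (Phi m n U b p q V d lam0 \<ge> 0 \<and>
     (\<exists>\<tau> j. min_strategy (m + n + 1) (n + 1) (Amat m n U b p q) \<tau> \<and> j < n + 1 \<and>
        (let Atau = restrict_strat (n + 1) (Amat m n U b p q) \<tau>;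
             Blam = Bmat m n V d lam0
         in (\<forall>cs. gg_cycle (m + n + 1) (n + 1) Atau Blam cs
                   \<and> cycle_accessible (m + n + 1) (n + 1) Atau Blam (MinN j) cs
                   \<longrightarrow> cycle_weight Atau Blam cs \<le> 0
                       \<and> (cycle_weight Atau Blam cs = 0 \<longrightarrow> (\<exists>i. MaxN i \<in> set cs \<and> m \<le> i))))))"
proof -
  \<comment> \<open>\<open>U_fin\<close>, ..., \<open>q_fin\<close> are not needed: an infinite entry of \<open>A\<close> enters \<open>sharp_map\<close> and
    the arc weights alike, as the real number \<open>real_of_ereal \<infinity> = 0\<close>.\<close>
  interpret parametric_game m n "Amat m n U b p q" V d
    using A_cols B_rows by unfold_locales blast+
  show ?thesis
    unfolding optimal_def Phi_neg_iff cycle_time_neg_below_iff optimality_certificate_iff_gg_cycles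
    by (rule refl)
qed

end
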